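(* Suppose that for every binary system $(S,\star)$ and every nonempty compact convex subset $C\subseteq\Pr(S)$ closed under $\star$ there is $\mu\in C$ with $\mu\star\mu=\mu$. Then: for every $c:\mathbb{T}\to[0,1]$ and $\epsilon>0$ there exist $r\in[0,1]$ and an increasing sequence $\mu_i$ ($i\in\omega$) of elements of $\mathbb{A}$ such that whenever $t\in\mathbb{T}_m$ and $i_0<\dots<i_{m-1}$ (natural numbers) is admissible for $t$, we have $|c(t(\mu_{i_0},\dots,\mu_{i_{m-1}}))-r|<\epsilon$.
   Context: For a set $S$, $\Pr(S)$ is the set of finitely additive probability measures on $S$, identified with positive linear functionals $f$ on $\ell^\infty(S)$ with $f(\bar1)=1$, with the weak* topology. For a binary operation $\star$ on $S$ and $\mu,\nu\in\Pr(S)$, $(\mu\star\nu)(f)=\int\int f(x\star y)\,d\nu(y)\,d\mu(x)$. For $a,b\subseteq(0,1]$ put $a\,\hat{}\,b=\tfrac12 a\cup\tfrac12(b+1)$; $\mathbb{T}$ is the set generated from $\mathbf{1}=\{1\}$ by $\hat{}$ (free binary system on one generator; each $t\neq\mathbf1$ is uniquely $a\,\hat{}\,b$). $\#(t)$ is the cardinality of $t$, $\mathbb{T}_n=\{t:\#(t)=n\}$, $\mathbb{A}_n$ is the set of probability measures on $\mathbb{T}_n$, $\mathbb{A}$ the disjoint union of the $\mathbb{A}_n$, $\#(\nu)=n$ for $\nu\in\mathbb{A}_n$; a sequence $\mu_i$ in $\mathbb{A}$ is increasing if $i<j$ implies $\#(\mu_i)<\#(\mu_j)$. $c$ is extended linearly: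 $c(\nu)=\sum_t\nu(\{t\})c(t)$. Substitution: for $t\in\mathbb{T}_m$ and $u_0,\dots,u_{m-1}\in\mathbb{T}$, $\mathbf1(u_0)=u_0$ and $(a\,\hat{}\,b)(u_0,\dots,u_{m-1})=a(u_0,\dots,u_{p-1})\,\hat{}\,b(u_p,\dots,u_{m-1})$ with $p=\#(a)$ (i.e. $u_i$ replaces the $i$-th occurrence of $\mathbf1$ in the term $t$); this extends $m$-multilinearly to a map $\mathbb{A}^m\to\mathbb{A}$. For $t\in\mathbb{T}$ and $k<\#(t)$ define $t_k$ recursively: $t_k=\mathbf1$ if $t=\mathbf1$, $k=0$; $t_k=a_k\,\hat{}\,\mathbf1$ if $t=a\,\hat{}\,b$ and $k<\#(a)$; $t_k=a\,\hat{}\,b_{k-\#(a)}$ if $t=a\,\hat{}\,b$ and $\#(a)\le k<\#(t)$. Let $l_k(t)=\#(t_k)-2$. For $t\in\mathbb{T}_m$, an increasing sequence $i_0<\dots<i_{m-1}$ is admissible for $t$ if $l_k(t)\le i_k$ for all $k<m$. *)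

theory Defs
  imports "HOL-Analysis.Analysis" "HOL-Probability.Probability_Mass_Function"
begin

definition linfty :: "'a set \<Rightarrow> ('a \<Rightarrow> real) set" where
  "linfty S = {f. (\<exists>B. \<forall>x\<in>S. \<bar>f x\<bar> \<le> B) \<and> (\<forall>x. x \<notin> S \<longrightarrow> f x = 0)}"

text \<open>Pr(S): positive linear functionals on ell-infinity(S) with value 1 at the
  constant function 1; normalised to be 0 outside ell-infinity(S), so that the product
  (pointwise) topology on the function space restricts to the weak* topology.\<close>
definition PrS :: "'a set \<Rightarrow> (('a \<Rightarrow> real) \<Rightarrow> real) set" where
  "PrS S = {\<phi>.
     (\<forall>f\<in>linfty S. \<forall>g\<in>linfty S. \<phi> (\<lambda>x. f x + g x) = \<phi> f + \<phi> g) \<and>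
     (\<forall>a. \<forall>f\<in>linfty S. \<phi> (\<lambda>x. a * f x) = a * \<phi> f) \<and>
     (\<forall>f\<in>linfty S. (\<forall>x\<in>S. 0 \<le> f x) \<longrightarrow> 0 \<le> \<phi> f) \<and>
     \<phi> (\<lambda>x. if x \<in> S then 1 else 0) = 1 \<and>
     (\<forall>f. f \<notin> linfty S \<longrightarrow> \<phi> f = 0)}"

definition conv :: "('a \<Rightarrow> 'a \<Rightarrow> 'a) \<Rightarrow> 'a set \<Rightarrow> (('a \<Rightarrow> real) \<Rightarrow> real)
                      \<Rightarrow> (('a \<Rightarrow> real) \<Rightarrow> real) \<Rightarrow> (('a \<Rightarrow> real) \<Rightarrow> real)" where
  "conv op S \<mu> \<nu> = (\<lambda>f. if f \<in> linfty S then
      \<mu> (\<lambda>x. if x \<in> S then \<nu> (\<lambda>y. if y \<in> S then f (op x y) else 0) else 0)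
    else 0)"

definition convex_fun_set :: "(('a \<Rightarrow> real) \<Rightarrow> real) set \<Rightarrow> bool" where
  "convex_fun_set C \<longleftrightarrow> (\<forall>\<mu>\<in>C. \<forall>\<nu>\<in>C. \<forall>u::real. 0 \<le> u \<and> u \<le> 1 \<longrightarrow>
      (\<lambda>f. u * \<mu> f + (1 - u) * \<nu> f) \<in> C)"

datatype T = One | Hat T T

fun card_T :: "T \<Rightarrow> nat" where
  "card_T One = 1"
| "card_T (Hat a b) = card_T a + card_T b"

fun subst :: "T \<Rightarrow> T list \<Rightarrow> T" where
  "subst One us = hd us"
| "subst (Hat a b) us = Hat (subst a (take (card_T a) us)) (subst b (drop (card_T a) us))"

definition in_A :: "nat \<Rightarrow> T pmf \<Rightarrow> bool" where
  "in_A n \<nu> \<longleftrightarrow> set_pmf \<nu> \<subseteq> {t. card_T t = n}"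

fun subst_A :: "T \<Rightarrow> T pmf list \<Rightarrow> T pmf" where
  "subst_A One \<nu>s = hd \<nu>s"
| "subst_A (Hat a b) \<nu>s = map_pmf (\<lambda>(x, y). Hat x y)
      (pair_pmf (subst_A a (take (card_T a) \<nu>s)) (subst_A b (drop (card_T a) \<nu>s)))"

definition c_A :: "(T \<Rightarrow> real) \<Rightarrow> T pmf \<Rightarrow> real" where
  "c_A c \<nu> = (\<Sum>t\<in>set_pmf \<nu>. pmf \<nu> t * c t)"

text \<open>t_k and l_k(t) = #(t_k) - 2 (an integer; equals -1 for t = 1).\<close>
fun sub_k :: "T \<Rightarrow> nat \<Rightarrow> T" where
  "sub_k One k = One"
| "sub_k (Hat a b) k = (if k < card_T a then Hat (sub_k a k) One
                        else Hat a (sub_k b (k - card_T a)))"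

definition l_k :: "nat \<Rightarrow> T \<Rightarrow> int" where
  "l_k k t = int (card_T (sub_k t k)) - 2"

definition admissible :: "T \<Rightarrow> nat list \<Rightarrow> bool" where
  "admissible t is \<longleftrightarrow> length is = card_T t \<and> sorted_wrt (<) is \<and>
     (\<forall>k < card_T t. l_k k t \<le> int (is ! k))"

end

(*
  An idempotent ultrafilter U on (\<nat>, +) (Ellis' lemma in \<beta>\<nat>) makes the finitely additive
  probability measures on a copy of \<T> that are concentrated on the levels \<T>\<^sub>n, n \<in> U, a nonempty
  compact convex set closed under the convolution induced by Hat. The hypothesis yields an
  idempotent \<mu> in it, i.e. a mean m on \<T> with m g = m (x \<mapsto> m (y \<mapsto> g (Hat x y))). Iterating,
  integrating c (t(x\<^sub>0, ..., x\<^sub>m\<^sub>-\<^sub>1)) against m in every argument gives m c for every term t, so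
  r = m c works provided the \<mu>\<^sub>i approximate m well enough, one argument at a time. Each \<mu>\<^sub>i is
  chosen finitely supported on a single level and approximates m within \<epsilon> / 2\<^sup>i\<^sup>+\<^sup>2 on the finitely
  many conditional means that can occur at position i of an admissible sequence; the errors
  telescope to less than \<epsilon>. A single level is possible because the rounding cells of positive
  m-mass all have their levels in U, hence share a common level.
*)
theory Submission
  imports Defs
begin

section \<open>Ultrafilters on \<open>\<nat>\<close> and an idempotent ultrafilter\<close>

definition ultrafilter :: "nat set set \<Rightarrow> bool" where
  "ultrafilter U \<longleftrightarrow> {} \<notin> U \<and> (\<forall>A B. A \<in> U \<longrightarrow> A \<subseteq> B \<longrightarrow> B \<in> U) \<and>
     (\<forall>A\<in>U. \<forall>B\<in>U. A \<inter> B \<in> U) \<and> (\<forall>A. A \<in> U \<or> - A \<in> U)"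

context
  fixes U assumes U: "ultrafilter U"
begin

lemma ultrafilter_empty: "{} \<notin> U"
  using U unfolding ultrafilter_def by blast

lemma ultrafilter_mono: "A \<in> U \<Longrightarrow> A \<subseteq> B \<Longrightarrow> B \<in> U"
  using U unfolding ultrafilter_def by blast

lemma ultrafilter_Int: "A \<in> U \<Longrightarrow> B \<in> U \<Longrightarrow> A \<inter> B \<in> U"
  using U unfolding ultrafilter_def by blast

lemma ultrafilter_Compl_iff: "- A \<in> U \<longleftrightarrow> A \<notin> U"
  using U ultrafilter_empty ultrafilter_Int[of A "- A"] unfolding ultrafilter_def by auto

lemma ultrafilter_UNIV: "UNIV \<in> U"
  using U unfolding ultrafilter_def by blast

lemma ultrafilter_Inter: "finite G \<Longrightarrow> G \<subseteq> U \<Longrightarrow> \<Inter>G \<in> U"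
  by (induction G rule: finite_induct) (auto simp: ultrafilter_UNIV ultrafilter_Int)

end

lemma ultrafilter_eqI:
  assumes "ultrafilter U" "ultrafilter V" "U \<subseteq> V"
  shows "U = V"
  using assms ultrafilter_Compl_iff by blast

definition finite_inter_prop :: "nat set set \<Rightarrow> bool" where
  "finite_inter_prop F \<longleftrightarrow> (\<forall>G. finite G \<longrightarrow> G \<subseteq> F \<longrightarrow> \<Inter>G \<noteq> {})"

lemma finite_inter_propD: "finite_inter_prop F \<Longrightarrow> finite G \<Longrightarrow> G \<subseteq> F \<Longrightarrow> \<Inter>G \<noteq> {}"
  unfolding finite_inter_prop_def by blast

lemma finite_inter_prop_insert_iff:
  assumes "finite_inter_prop M"
  shows "finite_inter_prop (insert A M) \<longleftrightarrow> (\<forall>G. finite G \<longrightarrow> G \<subseteq> M \<longrightarrow> A \<inter> \<Inter>G \<noteq> {})"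
proof
  assume "finite_inter_prop (insert A M)"
  then show "\<forall>G. finite G \<longrightarrow> G \<subseteq> M \<longrightarrow> A \<inter> \<Inter>G \<noteq> {}"
    unfolding finite_inter_prop_def by (metis Inter_insert finite_insert insert_mono)
next
  assume A: "\<forall>G. finite G \<longrightarrow> G \<subseteq> M \<longrightarrow> A \<inter> \<Inter>G \<noteq> {}"
  show "finite_inter_prop (insert A M)"
    unfolding finite_inter_prop_def
  proof (intro allI impI)
    fix G assume G: "finite G" "G \<subseteq> insert A M"
    show "\<Inter>G \<noteq> {}"
    proof (cases "A \<in> G")
      case True
      then have "\<Inter>G = A \<inter> \<Inter>(G - {A})" by blast
      then show ?thesis using A G by auto
    next
      case False
      then show ?thesis using assms G unfolding finite_inter_prop_def by blast
    qed
  qed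
qed

lemma maximal_finite_inter_prop_exists:
  assumes "finite_inter_prop F"
  obtains M where "F \<subseteq> M" "finite_inter_prop M" "\<And>A. finite_inter_prop (insert A M) \<Longrightarrow> A \<in> M"
proof -
  let ?\<A> = "{M. F \<subseteq> M \<and> finite_inter_prop M}"
  have "\<exists>M\<in>?\<A>. \<forall>X\<in>?\<A>. M \<subseteq> X \<longrightarrow> X = M"
  proof (rule subset_Zorn_nonempty)
    show "?\<A> \<noteq> {}" using assms by blast
  next
    fix \<C> assume \<C>: "\<C> \<noteq> {}" "subset.chain ?\<A> \<C>"
    have "F \<subseteq> \<Union>\<C>" using \<C> unfolding subset_chain_def by blast
    moreover have "finite_inter_prop (\<Union>\<C>)"
      unfolding finite_inter_prop_def
    proof (intro allI impI)
      fix G assume G: "finite G" "G \<subseteq> \<Union>\<C>"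
      obtain B where B: "B \<in> \<C>" "G \<subseteq> B"
        using finite_subset_Union_chain[OF G \<C>(1) \<C>(2)] by blast
      then have "finite_inter_prop B" using \<C>(2) unfolding subset_chain_def by blast
      then show "\<Inter>G \<noteq> {}" using B G(1) unfolding finite_inter_prop_def by blast
    qed
    ultimately show "\<Union>\<C> \<in> ?\<A>" by blast
  qed
  then obtain M where M: "M \<in> ?\<A>" and max: "\<forall>X\<in>?\<A>. M \<subseteq> X \<longrightarrow> X = M" by (rule bexE)
  show thesis
  proof (rule that)
    show "F \<subseteq> M" "finite_inter_prop M" using M by simp_all
    fix A assume "finite_inter_prop (insert A M)"
    then have "insert A M \<in> ?\<A>" using M by auto
    then have "insert A M = M" using max by (meson subset_insertI)
    then show "A \<in> M" by blast
  qed
qed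

lemma maximal_finite_inter_prop_ultrafilter:
  assumes fip: "finite_inter_prop M" and max: "\<And>A. finite_inter_prop (insert A M) \<Longrightarrow> A \<in> M"
  shows "ultrafilter M"
proof -
  note ins = finite_inter_prop_insert_iff[OF fip]
  note nonempty = finite_inter_propD[OF fip]
  have sub: "B \<in> M" if "A \<in> M" "A \<subseteq> B" for A B
  proof (rule max, unfold ins, intro allI impI)
    fix G assume "finite G" "G \<subseteq> M"
    then have "A \<inter> \<Inter>G \<noteq> {}" using nonempty[of "insert A G"] \<open>A \<in> M\<close> by simp
    then show "B \<inter> \<Inter>G \<noteq> {}" using \<open>A \<subseteq> B\<close> by blast
  qed
  have int: "A \<inter> B \<in> M" if "A \<in> M" "B \<in> M" for A B
  proof (rule max, unfold ins, intro allI impI)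
    fix G assume "finite G" "G \<subseteq> M"
    then show "A \<inter> B \<inter> \<Inter>G \<noteq> {}" using nonempty[of "insert A (insert B G)"] that
      by (simp add: Int_assoc)
  qed
  have ultra: "A \<in> M \<or> - A \<in> M" for A
  proof (rule ccontr)
    assume "\<not> (A \<in> M \<or> - A \<in> M)"
    then have "\<not> finite_inter_prop (insert A M)" "\<not> finite_inter_prop (insert (- A) M)"
      using max by blast+
    then obtain G1 G2 where G1: "finite G1" "G1 \<subseteq> M" "A \<inter> \<Inter>G1 = {}"
      and G2: "finite G2" "G2 \<subseteq> M" "- A \<inter> \<Inter>G2 = {}"
      unfolding ins by blast
    have "\<Inter>(G1 \<union> G2) = {}" using G1(3) G2(3) by (simp add: Inter_Un_distrib) blast
    then show False using nonempty[of "G1 \<union> G2"] G1 G2 by simp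
  qed
  have "{} \<notin> M" using nonempty[of "{{}}"] by auto
  then show ?thesis unfolding ultrafilter_def using sub int ultra by blast
qed

lemma ultrafilter_extends_finite_inter_prop:
  assumes "finite_inter_prop F"
  obtains U where "ultrafilter U" "F \<subseteq> U"
proof -
  obtain M where "F \<subseteq> M" "finite_inter_prop M" "\<And>A. finite_inter_prop (insert A M) \<Longrightarrow> A \<in> M"
    using maximal_finite_inter_prop_exists[OF assms] by blast
  then show thesis using that maximal_finite_inter_prop_ultrafilter by blast
qed

text \<open>Closed sets of the Stone-Cech compactification \<open>\<beta>\<nat>\<close>: \<open>p\<close> lies in the closure of
  \<open>K\<close> iff every \<open>A \<in> p\<close> belongs to some \<open>q \<in> K\<close>.\<close>
definition ultra_closed :: "nat set set set \<Rightarrow> bool" where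
  "ultra_closed K \<longleftrightarrow> (\<forall>p\<in>K. ultrafilter p) \<and>
     (\<forall>p. ultrafilter p \<longrightarrow> (\<forall>A\<in>p. \<exists>q\<in>K. A \<in> q) \<longrightarrow> p \<in> K)"

lemma ultra_closedD: "ultra_closed K \<Longrightarrow> p \<in> K \<Longrightarrow> ultrafilter p"
  unfolding ultra_closed_def by blast

lemma ultra_closedI:
  "(\<And>p. p \<in> K \<Longrightarrow> ultrafilter p) \<Longrightarrow>
   (\<And>p. ultrafilter p \<Longrightarrow> (\<And>A. A \<in> p \<Longrightarrow> \<exists>q\<in>K. A \<in> q) \<Longrightarrow> p \<in> K) \<Longrightarrow> ultra_closed K"
  unfolding ultra_closed_def by blast

lemma ultra_closed_member:
  assumes "ultra_closed K" "ultrafilter p" "\<And>A. A \<in> p \<Longrightarrow> \<exists>q\<in>K. A \<in> q"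
  shows "p \<in> K"
  using assms unfolding ultra_closed_def by blast

lemma ultra_closed_Inter:
  assumes "\<K> \<noteq> {}" and closed: "\<And>K. K \<in> \<K> \<Longrightarrow> ultra_closed K"
  shows "ultra_closed (\<Inter>\<K>)"
proof (rule ultra_closedI)
  fix p assume "p \<in> \<Inter>\<K>"
  then show "ultrafilter p" using assms ultra_closedD by blast
next
  fix p assume p: "ultrafilter p" "\<And>A. A \<in> p \<Longrightarrow> \<exists>q\<in>\<Inter>\<K>. A \<in> q"
  show "p \<in> \<Inter>\<K>"
  proof
    fix K assume K: "K \<in> \<K>"
    show "p \<in> K" by (rule ultra_closed_member[OF closed[OF K] p(1)]) (use p(2) K in blast)
  qed
qed

lemma ultra_closed_Int:
  assumes "ultra_closed K" "ultra_closed L"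
  shows "ultra_closed (K \<inter> L)"
proof -
  have "ultra_closed (\<Inter>{K, L})" by (rule ultra_closed_Inter) (use assms in auto)
  then show ?thesis by simp
qed

lemma ultra_closed_basic: "ultra_closed {q. ultrafilter q \<and> B \<in> q}"
proof (rule ultra_closedI)
  fix p assume p: "ultrafilter p" and "\<And>A. A \<in> p \<Longrightarrow> \<exists>q\<in>{q. ultrafilter q \<and> B \<in> q}. A \<in> q"
  then have "- B \<notin> p" using ultrafilter_Compl_iff by blast
  then show "p \<in> {q. ultrafilter q \<and> B \<in> q}" using p ultrafilter_Compl_iff by blast
qed simp

lemma ultra_closed_compact:
  assumes closed: "\<And>K. K \<in> \<K> \<Longrightarrow> ultra_closed K" and "\<K> \<noteq> {}"
    and fip: "\<And>\<G>. finite \<G> \<Longrightarrow> \<G> \<subseteq> \<K> \<Longrightarrow> \<G> \<noteq> {} \<Longrightarrow> \<Inter>\<G> \<noteq> {}"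
  shows "\<Inter>\<K> \<noteq> {}"
proof -
  define F where "F = {A. \<exists>K\<in>\<K>. \<forall>q\<in>K. A \<in> q}"
  have "finite_inter_prop F"
    unfolding finite_inter_prop_def
  proof (intro allI impI)
    fix G assume G: "finite G" "G \<subseteq> F"
    then have "\<forall>A\<in>G. \<exists>K. K \<in> \<K> \<and> (\<forall>q\<in>K. A \<in> q)" unfolding F_def by blast
    then obtain k where k: "\<forall>A\<in>G. k A \<in> \<K> \<and> (\<forall>q\<in>k A. A \<in> q)" by (rule bchoice[THEN exE])
    obtain K0 where K0: "K0 \<in> \<K>" using \<open>\<K> \<noteq> {}\<close> by blast
    have "\<Inter>(insert K0 (k ` G)) \<noteq> {}" by (rule fip) (use G(1) k K0 in auto)
    then obtain q where q: "q \<in> \<Inter>(insert K0 (k ` G))" by (meson ex_in_conv)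
    have uq: "ultrafilter q" using closed[OF K0] q by (simp add: ultra_closedD)
    have "G \<subseteq> q" using q k by auto
    then have "\<Inter>G \<in> q" by (rule ultrafilter_Inter[OF uq G(1)])
    then show "\<Inter>G \<noteq> {}" using ultrafilter_empty[OF uq] by auto
  qed
  then obtain p where p: "ultrafilter p" "F \<subseteq> p" by (rule ultrafilter_extends_finite_inter_prop)
  have "p \<in> K" if K: "K \<in> \<K>" for K
  proof (rule ultra_closed_member[OF closed[OF K] p(1)])
    fix A assume "A \<in> p"
    then have "- A \<notin> F" using p ultrafilter_Compl_iff[OF p(1)] by auto
    then obtain q where q: "q \<in> K" "- A \<notin> q" using K unfolding F_def by auto
    have "ultrafilter q" using closed[OF K] q(1) by (rule ultra_closedD)
    then show "\<exists>q\<in>K. A \<in> q" using q ultrafilter_Compl_iff by auto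
  qed
  then show ?thesis by blast
qed

definition ultra_plus :: "nat set set \<Rightarrow> nat set set \<Rightarrow> nat set set" (infixl \<open>\<oplus>\<close> 65) where
  "p \<oplus> q = {A. {n. {m. n + m \<in> A} \<in> q} \<in> p}"

lemma mem_ultra_plus: "A \<in> p \<oplus> q \<longleftrightarrow> {n. {m. n + m \<in> A} \<in> q} \<in> p"
  unfolding ultra_plus_def by simp

lemma ultra_plus_assoc: "p \<oplus> q \<oplus> r = p \<oplus> (q \<oplus> r)"
  unfolding ultra_plus_def by (simp add: add.assoc)

lemma ultra_shift_mono:
  assumes "ultrafilter q" "A \<subseteq> B"
  shows "{n. {m. n + m \<in> A} \<in> q} \<subseteq> {n. {m. n + m \<in> B} \<in> q}"
proof (intro subsetI CollectI, elim CollectE)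
  fix n assume "{m. n + m \<in> A} \<in> q"
  moreover have "{m. n + m \<in> A} \<subseteq> {m. n + m \<in> B}" using assms(2) by auto
  ultimately show "{m. n + m \<in> B} \<in> q" by (rule ultrafilter_mono[OF assms(1)])
qed

lemma ultrafilter_ultra_plus:
  assumes p: "ultrafilter p" and q: "ultrafilter q"
  shows "ultrafilter (p \<oplus> q)"
  unfolding ultrafilter_def mem_ultra_plus
proof (intro conjI allI impI ballI)
  have "{n. {m. n + m \<in> ({}::nat set)} \<in> q} = {}" using ultrafilter_empty[OF q] by simp
  then show "{n. {m. n + m \<in> {}} \<in> q} \<notin> p" using ultrafilter_empty[OF p] by simp
next
  fix A B :: "nat set" assume A: "{n. {m. n + m \<in> A} \<in> q} \<in> p" and AB: "A \<subseteq> B"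
  show "{n. {m. n + m \<in> B} \<in> q} \<in> p" by (rule ultrafilter_mono[OF p A ultra_shift_mono[OF q AB]])
next
  fix A B :: "nat set" assume "A \<in> p \<oplus> q" "B \<in> p \<oplus> q"
  then have "{n. {m. n + m \<in> A} \<in> q} \<inter> {n. {m. n + m \<in> B} \<in> q} \<in> p"
    unfolding mem_ultra_plus by (rule ultrafilter_Int[OF p])
  moreover have "{n. {m. n + m \<in> A} \<in> q} \<inter> {n. {m. n + m \<in> B} \<in> q} \<subseteq> {n. {m. n + m \<in> A \<inter> B} \<in> q}"
  proof
    fix n :: nat assume "n \<in> {n. {m. n + m \<in> A} \<in> q} \<inter> {n. {m. n + m \<in> B} \<in> q}"
    then have "{m. n + m \<in> A} \<inter> {m. n + m \<in> B} \<in> q" using ultrafilter_Int[OF q] by blast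
    moreover have "{m. n + m \<in> A} \<inter> {m. n + m \<in> B} = {m. n + m \<in> A \<inter> B}" by auto
    ultimately show "n \<in> {n. {m. n + m \<in> A \<inter> B} \<in> q}" by simp
  qed
  ultimately show "{n. {m. n + m \<in> A \<inter> B} \<in> q} \<in> p" by (rule ultrafilter_mono[OF p])
next
  fix A :: "nat set"
  have "{m. n + m \<in> - A} = - {m. n + m \<in> A}" for n :: nat by auto
  then have "{n. {m. n + m \<in> - A} \<in> q} = - {n. {m. n + m \<in> A} \<in> q}"
    using ultrafilter_Compl_iff[OF q] by auto
  then show "{n. {m. n + m \<in> A} \<in> q} \<in> p \<or> {n. {m. n + m \<in> - A} \<in> q} \<in> p"
    using ultrafilter_Compl_iff[OF p] by simp
qed

definition free_ultrafilters :: "nat set set set" where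
  "free_ultrafilters = {p. ultrafilter p \<and> (\<forall>N. {N..} \<in> p)}"

definition plus_closed :: "nat set set set \<Rightarrow> bool" where
  "plus_closed K \<longleftrightarrow> (\<forall>p\<in>K. \<forall>q\<in>K. p \<oplus> q \<in> K)"

lemma ultra_closed_free_ultrafilters: "ultra_closed free_ultrafilters"
proof (rule ultra_closedI)
  fix p assume p: "ultrafilter p" and near: "\<And>A. A \<in> p \<Longrightarrow> \<exists>q\<in>free_ultrafilters. A \<in> q"
  have "- {N..} \<notin> p" for N
    using near[of "- {N..}"] ultrafilter_Compl_iff unfolding free_ultrafilters_def by blast
  then show "p \<in> free_ultrafilters" using p ultrafilter_Compl_iff unfolding free_ultrafilters_def by blast
qed (simp add: free_ultrafilters_def)

lemma plus_closed_free_ultrafilters: "plus_closed free_ultrafilters"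
  unfolding plus_closed_def
proof (intro ballI)
  fix p q assume "p \<in> free_ultrafilters" "q \<in> free_ultrafilters"
  then have p: "ultrafilter p" and q: "ultrafilter q" "\<And>N. {N..} \<in> q"
    unfolding free_ultrafilters_def by auto
  have "{N..} \<subseteq> {m. n + m \<in> {N..}}" for n N :: nat by auto
  then have "{n. {m. n + m \<in> {N..}} \<in> q} = UNIV" for N
    using ultrafilter_mono[OF q(1) q(2)] by blast
  then have "{N..} \<in> p \<oplus> q" for N
    unfolding mem_ultra_plus using ultrafilter_UNIV[OF p] by simp
  then show "p \<oplus> q \<in> free_ultrafilters"
    unfolding free_ultrafilters_def using ultrafilter_ultra_plus[OF p q(1)] by simp
qed

lemma free_ultrafilters_nonempty: "free_ultrafilters \<noteq> {}"
proof -
  have "finite_inter_prop (range atLeast)"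
    unfolding finite_inter_prop_def
  proof (intro allI impI)
    fix G assume "finite G" "G \<subseteq> range (atLeast :: nat \<Rightarrow> nat set)"
    then obtain Ns where "finite Ns" "G = atLeast ` Ns" by (meson finite_subset_image)
    then have "Max (insert 0 Ns) \<in> \<Inter>G" by auto
    then show "\<Inter>G \<noteq> {}" by blast
  qed
  then obtain p where "ultrafilter p" "range atLeast \<subseteq> p"
    by (rule ultrafilter_extends_finite_inter_prop)
  then have "p \<in> free_ultrafilters" unfolding free_ultrafilters_def by auto
  then show ?thesis by blast
qed

lemma subset_chain_uminus:
  assumes "subset.chain (uminus ` \<A>) \<C>"
  shows "subset.chain \<A> (uminus ` \<C>)"
  unfolding subset_chain_def
proof (intro conjI ballI)
  show "uminus ` \<C> \<subseteq> \<A>"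
  proof (rule image_subsetI)
    fix X assume "X \<in> \<C>"
    then obtain Z where "Z \<in> \<A>" "X = - Z" using assms unfolding subset_chain_def by blast
    then show "- X \<in> \<A>" by simp
  qed
next
  fix X Y assume "X \<in> uminus ` \<C>" "Y \<in> uminus ` \<C>"
  then obtain X' Y' where "X' \<in> \<C>" "Y' \<in> \<C>" "X = - X'" "Y = - Y'" by blast
  then show "X \<subseteq> Y \<or> Y \<subseteq> X" using assms unfolding subset_chain_def by auto
qed

lemma subset_Zorn_minimal:
  fixes \<A> :: "'a set set"
  assumes "\<A> \<noteq> {}" and chain: "\<And>\<C>. \<C> \<noteq> {} \<Longrightarrow> subset.chain \<A> \<C> \<Longrightarrow> \<Inter>\<C> \<in> \<A>"
  shows "\<exists>M\<in>\<A>. \<forall>X\<in>\<A>. X \<subseteq> M \<longrightarrow> X = M"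
proof -
  have "\<exists>N\<in>uminus ` \<A>. \<forall>Y\<in>uminus ` \<A>. N \<subseteq> Y \<longrightarrow> Y = N"
  proof (rule subset_Zorn_nonempty)
    show "uminus ` \<A> \<noteq> {}" using assms(1) by simp
  next
    fix \<C> :: "'a set set" assume \<C>: "\<C> \<noteq> {}" "subset.chain (uminus ` \<A>) \<C>"
    have "\<Inter>(uminus ` \<C>) \<in> \<A>" using chain \<C>(1) subset_chain_uminus[OF \<C>(2)] by simp
    moreover have "\<Union>\<C> = - \<Inter>(uminus ` \<C>)" by auto
    ultimately show "\<Union>\<C> \<in> uminus ` \<A>" by (metis image_eqI)
  qed
  then obtain M where M: "M \<in> \<A>" and max: "\<forall>Y\<in>uminus ` \<A>. - M \<subseteq> Y \<longrightarrow> Y = - M" by blast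
  have "X = M" if "X \<in> \<A>" "X \<subseteq> M" for X
    using max that by (metis Compl_subset_Compl_iff double_complement image_eqI)
  then show ?thesis using M by blast
qed

lemma ultra_closed_Inter_chain_nonempty:
  assumes "\<C> \<noteq> {}" "\<And>K. K \<in> \<C> \<Longrightarrow> K \<noteq> {} \<and> ultra_closed K"
    and total: "\<forall>X\<in>\<C>. \<forall>Y\<in>\<C>. X \<subseteq> Y \<or> Y \<subseteq> X"
  shows "\<Inter>\<C> \<noteq> {}"
proof (rule ultra_closed_compact)
  fix \<G> assume \<G>: "finite \<G>" "\<G> \<subseteq> \<C>" "\<G> \<noteq> {}"
  have "\<Inter>\<G> \<in> \<G>"
    by (rule Inter_in_chain[OF \<G>(1) \<G>(3), of UNIV]) (use total \<G>(2) in \<open>unfold subset_chain_def, blast\<close>)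
  then show "\<Inter>\<G> \<noteq> {}" using assms(2) \<G>(2) by blast
qed (use assms in auto)

lemma minimal_closed_subsemigroup_exists:
  obtains M where "M \<noteq> {}" "ultra_closed M" "plus_closed M" "M \<subseteq> free_ultrafilters"
    "\<And>X. X \<noteq> {} \<Longrightarrow> ultra_closed X \<Longrightarrow> plus_closed X \<Longrightarrow> X \<subseteq> M \<Longrightarrow> X = M"
proof -
  let ?\<A> = "{M. M \<noteq> {} \<and> ultra_closed M \<and> plus_closed M \<and> M \<subseteq> free_ultrafilters}"
  have "\<exists>M\<in>?\<A>. \<forall>X\<in>?\<A>. X \<subseteq> M \<longrightarrow> X = M"
  proof (rule subset_Zorn_minimal)
    show "?\<A> \<noteq> {}"
      using free_ultrafilters_nonempty ultra_closed_free_ultrafilters plus_closed_free_ultrafilters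
      by blast
  next
    fix \<C> assume \<C>: "\<C> \<noteq> {}" "subset.chain ?\<A> \<C>"
    have mem: "K \<noteq> {}" "ultra_closed K" "plus_closed K" "K \<subseteq> free_ultrafilters" if "K \<in> \<C>" for K
      using \<C>(2) that unfolding subset_chain_def by auto
    have "\<Inter>\<C> \<noteq> {}"
      by (rule ultra_closed_Inter_chain_nonempty[OF \<C>(1)]) (use mem \<C>(2) in \<open>auto simp: subset_chain_def\<close>)
    moreover have "ultra_closed (\<Inter>\<C>)" by (rule ultra_closed_Inter[OF \<C>(1) mem(2)])
    moreover have "plus_closed (\<Inter>\<C>)"
      using mem(3) unfolding plus_closed_def by (meson InterD InterI)
    moreover have "\<Inter>\<C> \<subseteq> free_ultrafilters" using mem(4) \<C>(1) by blast
    ultimately show "\<Inter>\<C> \<in> ?\<A>" by simp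
  qed
  then obtain M where M: "M \<in> ?\<A>" and min: "\<forall>X\<in>?\<A>. X \<subseteq> M \<longrightarrow> X = M" by (rule bexE)
  show thesis
  proof (rule that)
    show "M \<noteq> {}" "ultra_closed M" "plus_closed M" "M \<subseteq> free_ultrafilters" using M by simp_all
    fix X assume "X \<noteq> {}" "ultra_closed X" "plus_closed X" "X \<subseteq> M"
    then show "X = M" using min M by auto
  qed
qed

lemma ultra_plus_right_limit:
  assumes M: "ultra_closed M" and x: "ultrafilter x" and p: "ultrafilter p"
    and near: "\<And>A. A \<in> p \<Longrightarrow> \<exists>q\<in>M. A \<in> q \<oplus> x"
  obtains q where "q \<in> M" "p \<subseteq> q \<oplus> x"
proof -
  define T where "T A = {n. {m. n + m \<in> A} \<in> x}" for A :: "nat set"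
  define K where "K A = M \<inter> {q. ultrafilter q \<and> T A \<in> q}" for A
  have "\<Inter>(K ` p) \<noteq> {}"
  proof (rule ultra_closed_compact)
    fix L assume "L \<in> K ` p"
    then obtain A where "L = K A" by blast
    then show "ultra_closed L" unfolding K_def by (simp add: ultra_closed_Int[OF M ultra_closed_basic])
  next
    show "K ` p \<noteq> {}" using ultrafilter_UNIV[OF p] by blast
  next
    fix \<G> assume "finite \<G>" "\<G> \<subseteq> K ` p"
    then obtain As where As: "finite As" "As \<subseteq> p" "\<G> = K ` As" by (meson finite_subset_image)
    have "\<Inter>As \<in> p" by (rule ultrafilter_Inter[OF p As(1,2)])
    then obtain q where q: "q \<in> M" "\<Inter>As \<in> q \<oplus> x" using near by blast
    have uq: "ultrafilter q" by (rule ultra_closedD[OF M q(1)])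
    have "q \<in> K A" if "A \<in> As" for A
    proof -
      have "T (\<Inter>As) \<in> q" using q(2) unfolding mem_ultra_plus T_def .
      moreover have "T (\<Inter>As) \<subseteq> T A" unfolding T_def by (rule ultra_shift_mono[OF x]) (use that in blast)
      ultimately have "T A \<in> q" by (rule ultrafilter_mono[OF uq])
      then show ?thesis unfolding K_def using q(1) uq by simp
    qed
    then have "q \<in> \<Inter>\<G>" unfolding As(3) by blast
    then show "\<Inter>\<G> \<noteq> {}" by blast
  qed
  then obtain q where q: "\<And>A. A \<in> p \<Longrightarrow> q \<in> K A" by blast
  show thesis
  proof (rule that)
    show "q \<in> M" using q[OF ultrafilter_UNIV[OF p]] unfolding K_def by simp
    show "p \<subseteq> q \<oplus> x"
    proof
      fix A assume "A \<in> p"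
      then have "T A \<in> q" using q unfolding K_def by simp
      then show "A \<in> q \<oplus> x" unfolding mem_ultra_plus T_def .
    qed
  qed
qed

lemma ultra_closed_right_translate:
  assumes M: "ultra_closed M" and x: "ultrafilter x"
  shows "ultra_closed ((\<lambda>q. q \<oplus> x) ` M)"
proof (rule ultra_closedI)
  fix p assume "p \<in> (\<lambda>q. q \<oplus> x) ` M"
  then obtain q where "q \<in> M" "p = q \<oplus> x" by blast
  then show "ultrafilter p" using ultrafilter_ultra_plus[OF ultra_closedD[OF M] x] by simp
next
  fix p assume p: "ultrafilter p" and near: "\<And>A. A \<in> p \<Longrightarrow> \<exists>r\<in>(\<lambda>q. q \<oplus> x) ` M. A \<in> r"
  obtain q where q: "q \<in> M" "p \<subseteq> q \<oplus> x"
    by (rule ultra_plus_right_limit[OF M x p]) (use near in blast)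
  then have "p = q \<oplus> x"
    using ultrafilter_eqI[OF p ultrafilter_ultra_plus[OF ultra_closedD[OF M] x]] by blast
  then show "p \<in> (\<lambda>q. q \<oplus> x) ` M" using q(1) by blast
qed

lemma ultra_closed_right_stabilizer:
  assumes x: "ultrafilter x"
  shows "ultra_closed {q. ultrafilter q \<and> q \<oplus> x = x}"
proof (rule ultra_closedI)
  fix p assume p: "ultrafilter p"
    and near: "\<And>A. A \<in> p \<Longrightarrow> \<exists>q\<in>{q. ultrafilter q \<and> q \<oplus> x = x}. A \<in> q"
  have "x \<subseteq> p \<oplus> x"
  proof
    fix A assume A: "A \<in> x"
    show "A \<in> p \<oplus> x"
    proof (rule ccontr)
      assume "A \<notin> p \<oplus> x"
      then have "- {n. {m. n + m \<in> A} \<in> x} \<in> p"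
        using ultrafilter_Compl_iff[OF p] unfolding mem_ultra_plus by blast
      then obtain q where q: "ultrafilter q" "q \<oplus> x = x" "- {n. {m. n + m \<in> A} \<in> x} \<in> q"
        using near by blast
      then have "A \<notin> q \<oplus> x" unfolding mem_ultra_plus using ultrafilter_Compl_iff by blast
      then show False using q(2) A by simp
    qed
  qed
  then have "x = p \<oplus> x" by (rule ultrafilter_eqI[OF x ultrafilter_ultra_plus[OF p x]])
  then show "p \<in> {q. ultrafilter q \<and> q \<oplus> x = x}" using p by simp
qed simp

lemma plus_closed_right_translate:
  assumes "plus_closed M" "x \<in> M"
  shows "plus_closed ((\<lambda>q. q \<oplus> x) ` M)"
  unfolding plus_closed_def
proof (intro ballI)
  fix p q assume "p \<in> (\<lambda>q. q \<oplus> x) ` M" "q \<in> (\<lambda>q. q \<oplus> x) ` M"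
  then obtain p' q' where pq: "p' \<in> M" "q' \<in> M" "p = p' \<oplus> x" "q = q' \<oplus> x" by blast
  then have "p \<oplus> q = (p' \<oplus> x \<oplus> q') \<oplus> x" by (simp add: ultra_plus_assoc)
  moreover have "p' \<oplus> x \<oplus> q' \<in> M" using pq assms unfolding plus_closed_def by blast
  ultimately show "p \<oplus> q \<in> (\<lambda>q. q \<oplus> x) ` M" by blast
qed

lemma plus_closed_right_stabilizer:
  assumes "plus_closed M"
  shows "plus_closed (M \<inter> {q. ultrafilter q \<and> q \<oplus> x = x})"
  using assms ultrafilter_ultra_plus unfolding plus_closed_def by (simp add: ultra_plus_assoc)

text \<open>Ellis' lemma for \<open>(\<beta>\<nat>, \<oplus>)\<close>: a minimal closed subsemigroup \<open>M\<close> and \<open>x \<in> M\<close> satisfy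
  \<open>M \<oplus> x = M\<close>, and then \<open>{q \<in> M. q \<oplus> x = x}\<close> is a closed subsemigroup of \<open>M\<close>, hence all of \<open>M\<close>.\<close>
theorem idempotent_free_ultrafilter_exists:
  obtains U where "U \<in> free_ultrafilters" "U \<oplus> U = U"
proof -
  obtain M where M: "M \<noteq> {}" "ultra_closed M" "plus_closed M" "M \<subseteq> free_ultrafilters"
    and minimal: "\<And>X. X \<noteq> {} \<Longrightarrow> ultra_closed X \<Longrightarrow> plus_closed X \<Longrightarrow> X \<subseteq> M \<Longrightarrow> X = M"
    using minimal_closed_subsemigroup_exists by blast
  obtain x where x: "x \<in> M" using M(1) by blast
  have ux: "ultrafilter x" by (rule ultra_closedD[OF M(2) x])
  have "(\<lambda>q. q \<oplus> x) ` M = M"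
  proof (rule minimal)
    show "(\<lambda>q. q \<oplus> x) ` M \<subseteq> M" using M(3) x unfolding plus_closed_def by blast
  qed (use x ultra_closed_right_translate[OF M(2) ux] plus_closed_right_translate[OF M(3) x] in auto)
  then obtain e where e: "e \<in> M" "e \<oplus> x = x" using x by (metis imageE)
  have "M \<inter> {q. ultrafilter q \<and> q \<oplus> x = x} = M"
  proof (rule minimal)
    show "M \<inter> {q. ultrafilter q \<and> q \<oplus> x = x} \<noteq> {}" using e ultra_closedD[OF M(2) e(1)] by blast
  qed (use ultra_closed_Int[OF M(2) ultra_closed_right_stabilizer[OF ux]]
      plus_closed_right_stabilizer[OF M(3)] in auto)
  then have "x \<oplus> x = x" using x by blast
  then show thesis using that M(4) x by blast
qed

section \<open>Iterated means along terms\<close>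

lemma card_T_ge_1: "1 \<le> card_T t"
  by (induction t) auto

lemma finite_card_T_le: "finite {t. card_T t \<le> n}"
proof (induction n)
  case 0
  have "{t. card_T t \<le> 0} = {}"
    using card_T_ge_1 by (metis (mono_tags) Collect_empty_eq le_zero_eq not_one_le_zero)
  then show ?case by (metis finite.emptyI)
next
  case (Suc n)
  let ?S = "{t. card_T t \<le> n}"
  have "{t. card_T t \<le> Suc n} \<subseteq> insert One ((\<lambda>(a, b). Hat a b) ` (?S \<times> ?S))"
  proof
    fix t assume t: "t \<in> {t. card_T t \<le> Suc n}"
    show "t \<in> insert One ((\<lambda>(a, b). Hat a b) ` (?S \<times> ?S))"
    proof (cases t)
      case (Hat a b)
      then have "card_T a \<le> n" "card_T b \<le> n" using t card_T_ge_1[of a] card_T_ge_1[of b] by auto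
      then show ?thesis using Hat by force
    qed simp
  qed
  then show ?case by (rule finite_subset) (use Suc in simp)
qed

lemma card_sub_k: "k < card_T t \<Longrightarrow> Suc k \<le> card_T (sub_k t k)"
proof (induction t arbitrary: k)
  case (Hat a b)
  show ?case
  proof (cases "k < card_T a")
    case True
    then show ?thesis using Hat.IH(1)[of k] by simp
  next
    case False
    then have "k - card_T a < card_T b" using Hat.prems by simp
    then show ?thesis using Hat.IH(2)[of "k - card_T a"] False by simp
  qed
qed simp

definition sup_contractive :: "((T \<Rightarrow> real) \<Rightarrow> real) \<Rightarrow> bool" where
  "sup_contractive \<alpha> \<longleftrightarrow> (\<forall>g B. (\<forall>x. \<bar>g x\<bar> \<le> B) \<longrightarrow> \<bar>\<alpha> g\<bar> \<le> B)"

definition eval_at :: "T \<Rightarrow> (T \<Rightarrow> real) \<Rightarrow> real" where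
  "eval_at x = (\<lambda>g. g x)"

lemma sup_contractive_eval_at: "sup_contractive (eval_at x)"
  unfolding sup_contractive_def eval_at_def by blast

text \<open>\<open>iter_mean t [\<alpha>\<^sub>0, \<dots>, \<alpha>\<^sub>m\<^sub>-\<^sub>1] g\<close> integrates \<open>g (t(x\<^sub>0, \<dots>, x\<^sub>m\<^sub>-\<^sub>1))\<close> with respect to
  \<open>\<alpha>\<^sub>0, \<dots>, \<alpha>\<^sub>m\<^sub>-\<^sub>1\<close>, the variable \<open>x\<^sub>0\<close> outermost.\<close>
fun iter_mean :: "T \<Rightarrow> ((T \<Rightarrow> real) \<Rightarrow> real) list \<Rightarrow> (T \<Rightarrow> real) \<Rightarrow> real" where
  "iter_mean One \<alpha>s g = hd \<alpha>s g"
| "iter_mean (Hat a b) \<alpha>s g =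
     iter_mean a (take (card_T a) \<alpha>s) (\<lambda>x. iter_mean b (drop (card_T a) \<alpha>s) (\<lambda>y. g (Hat x y)))"

lemma iter_mean_bound:
  assumes "\<forall>\<alpha>\<in>set \<alpha>s. sup_contractive \<alpha>" "length \<alpha>s = card_T t" "\<And>x. \<bar>g x\<bar> \<le> B"
  shows "\<bar>iter_mean t \<alpha>s g\<bar> \<le> B"
  using assms
proof (induction t arbitrary: \<alpha>s g)
  case One
  then obtain \<alpha> where "\<alpha>s = [\<alpha>]" by (cases \<alpha>s) auto
  then show ?case using One unfolding sup_contractive_def by simp
next
  case (Hat a b)
  have "\<bar>iter_mean b (drop (card_T a) \<alpha>s) (\<lambda>y. g (Hat x y))\<bar> \<le> B" for x
    by (rule Hat.IH(2)) (use Hat.prems in \<open>auto dest: in_set_dropD\<close>)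
  moreover have "\<forall>\<alpha>\<in>set (take (card_T a) \<alpha>s). sup_contractive \<alpha>"
    using Hat.prems(1) by (auto dest: in_set_takeD)
  ultimately show ?case
    using Hat.IH(1)[of "take (card_T a) \<alpha>s" "\<lambda>x. iter_mean b (drop (card_T a) \<alpha>s) (\<lambda>y. g (Hat x y))"]
      Hat.prems(2) by simp
qed

lemma iter_mean_eval_at: "length xs = card_T t \<Longrightarrow> iter_mean t (map eval_at xs) g = g (subst t xs)"
proof (induction t arbitrary: xs g)
  case One
  then obtain x where "xs = [x]" by (cases xs) auto
  then show ?case by (simp add: eval_at_def)
next
  case (Hat a b)
  have "iter_mean (Hat a b) (map eval_at xs) g
      = iter_mean a (map eval_at (take (card_T a) xs))
          (\<lambda>x. iter_mean b (map eval_at (drop (card_T a) xs)) (\<lambda>y. g (Hat x y)))"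
    by (simp add: take_map drop_map)
  also have "\<dots> = g (subst (Hat a b) xs)" using Hat by simp
  finally show ?case .
qed

definition bounded_fun :: "(T \<Rightarrow> real) \<Rightarrow> bool" where
  "bounded_fun g \<longleftrightarrow> (\<exists>B. \<forall>x. \<bar>g x\<bar> \<le> B)"

lemma bounded_funI: "(\<And>x. \<bar>g x\<bar> \<le> B) \<Longrightarrow> bounded_fun g"
  unfolding bounded_fun_def by blast

lemma bounded_fun_Hat: "bounded_fun g \<Longrightarrow> bounded_fun (\<lambda>y. g (Hat x y))"
  unfolding bounded_fun_def by blast

lemma bounded_fun_add: "bounded_fun f \<Longrightarrow> bounded_fun g \<Longrightarrow> bounded_fun (\<lambda>x. f x + g x)"
  unfolding bounded_fun_def by (metis abs_triangle_ineq add_mono order_trans)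

lemma bounded_fun_mult: "bounded_fun f \<Longrightarrow> bounded_fun g \<Longrightarrow> bounded_fun (\<lambda>x. f x * g x)"
  unfolding bounded_fun_def abs_mult by (meson abs_ge_zero mult_mono order_trans)

lemma bounded_fun_const: "bounded_fun (\<lambda>x. c)"
  unfolding bounded_fun_def by blast

lemma bounded_fun_indicator: "bounded_fun (indicator S)"
  by (rule bounded_funI[of _ 1]) (simp add: indicator_def)

lemma bounded_fun_sum: "(\<And>i. i \<in> I \<Longrightarrow> bounded_fun (f i)) \<Longrightarrow> bounded_fun (\<lambda>x. \<Sum>i\<in>I. f i x)"
  by (induction I rule: infinite_finite_induct) (simp_all add: bounded_fun_const bounded_fun_add)

text \<open>The paper's idempotence \<open>m \<star> m = m\<close> for the operation \<open>Hat\<close>, read on test functions.\<close>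
locale idempotent_mean =
  fixes m :: "(T \<Rightarrow> real) \<Rightarrow> real"
  assumes sup_contractive: "sup_contractive m"
    and idempotent: "\<And>g. bounded_fun g \<Longrightarrow> m g = m (\<lambda>x. m (\<lambda>y. g (Hat x y)))"
begin

lemma bounded_fun_mean:
  assumes "\<And>x y. \<bar>f x y\<bar> \<le> B"
  shows "bounded_fun (\<lambda>x. m (f x))"
  by (rule bounded_funI[of _ B]) (use sup_contractive assms in \<open>simp add: sup_contractive_def\<close>)

lemma bounded_fun_mean_Hat:
  assumes "bounded_fun g"
  shows "bounded_fun (\<lambda>x. m (\<lambda>y. g (Hat x y)))"
proof -
  obtain B where "\<And>x. \<bar>g x\<bar> \<le> B" using assms unfolding bounded_fun_def by blast
  then show ?thesis by (intro bounded_fun_mean[of _ B])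
qed

lemma iter_mean_replicate: "bounded_fun g \<Longrightarrow> iter_mean t (replicate (card_T t) m) g = m g"
proof (induction t arbitrary: g)
  case (Hat a b)
  have "iter_mean (Hat a b) (replicate (card_T (Hat a b)) m) g
      = iter_mean a (replicate (card_T a) m) (\<lambda>x. m (\<lambda>y. g (Hat x y)))"
    using Hat.IH(2) bounded_fun_Hat[OF Hat.prems] by (simp add: replicate_add)
  also have "\<dots> = m g"
    using Hat.IH(1)[OF bounded_fun_mean_Hat[OF Hat.prems]] idempotent[OF Hat.prems] by simp
  finally show ?case .
qed simp

definition cond_mean :: "T \<Rightarrow> T list \<Rightarrow> (T \<Rightarrow> real) \<Rightarrow> real" where
  "cond_mean t xs g = iter_mean t (map eval_at xs @ replicate (card_T t - length xs) m) g"

lemma cond_mean_bound: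
  "length xs \<le> card_T t \<Longrightarrow> (\<And>x. \<bar>g x\<bar> \<le> B) \<Longrightarrow> \<bar>cond_mean t xs g\<bar> \<le> B"
  unfolding cond_mean_def
  by (rule iter_mean_bound) (auto simp: sup_contractive sup_contractive_eval_at)

lemma cond_mean_Nil: "bounded_fun g \<Longrightarrow> cond_mean t [] g = m g"
  unfolding cond_mean_def by (simp add: iter_mean_replicate)

lemma cond_mean_complete: "length xs = card_T t \<Longrightarrow> cond_mean t xs g = g (subst t xs)"
  unfolding cond_mean_def by (simp add: iter_mean_eval_at)

lemma cond_mean_Hat_left:
  assumes "length xs \<le> card_T a" "bounded_fun g"
  shows "cond_mean (Hat a b) xs g = cond_mean a xs (\<lambda>x. m (\<lambda>y. g (Hat x y)))"
  using assms iter_mean_replicate[OF bounded_fun_Hat[OF assms(2)]]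
  by (simp add: cond_mean_def)

lemma cond_mean_Hat_right:
  assumes "card_T a \<le> length xs"
  shows "cond_mean (Hat a b) xs g
    = cond_mean b (drop (card_T a) xs) (\<lambda>y. g (Hat (subst a (take (card_T a) xs)) y))"
  using assms iter_mean_eval_at[of "take (card_T a) xs" a]
  by (simp add: cond_mean_def take_map[symmetric] drop_map[symmetric] add.commute)

lemma cond_mean_snoc:
  "length xs < card_T t \<Longrightarrow> bounded_fun g \<Longrightarrow> cond_mean t xs g = m (\<lambda>x. cond_mean t (xs @ [x]) g)"
proof (induction t arbitrary: xs g)
  case One
  then show ?case by (simp add: cond_mean_def eval_at_def)
next
  case (Hat a b)
  show ?case
  proof (cases "length xs < card_T a")
    case True
    then show ?thesis
      using Hat.IH(1)[OF True bounded_fun_mean_Hat[OF Hat.prems(2)]] Hat.prems(2)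
      by (simp add: cond_mean_Hat_left)
  next
    case False
    then have "length (drop (card_T a) xs) < card_T b" using Hat.prems(1) by simp
    from Hat.IH(2)[OF this bounded_fun_Hat[OF Hat.prems(2)]] False
    show ?thesis by (simp add: cond_mean_Hat_right)
  qed
qed

lemma cond_mean_sub_k:
  "k < card_T t \<Longrightarrow> length xs = Suc k \<Longrightarrow> bounded_fun g \<Longrightarrow> cond_mean t xs g = cond_mean (sub_k t k) xs g"
proof (induction t arbitrary: k xs g)
  case (Hat a b)
  show ?case
  proof (cases "k < card_T a")
    case True
    then have "length xs \<le> card_T (sub_k a k)" using card_sub_k[of k a] Hat.prems(2) by simp
    then show ?thesis
      using Hat.IH(1)[OF True Hat.prems(2) bounded_fun_mean_Hat[OF Hat.prems(3)]] True Hat.prems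
      by (simp add: cond_mean_Hat_left)
  next
    case False
    then have "k - card_T a < card_T b" "length (drop (card_T a) xs) = Suc (k - card_T a)"
      using Hat.prems by auto
    from Hat.IH(2)[OF this bounded_fun_Hat[OF Hat.prems(3)]] False Hat.prems(2)
    show ?thesis by (simp add: cond_mean_Hat_right)
  qed
qed simp

end

section \<open>Expectations under finitely supported measures\<close>

text \<open>The iterated sum over the supports is the expectation under the product of the \<open>\<nu>s\<close> only
  when all supports are finite.\<close>
fun expect :: "T pmf list \<Rightarrow> (T list \<Rightarrow> real) \<Rightarrow> real" where
  "expect [] F = F []"
| "expect (\<nu> # \<nu>s) F = (\<Sum>x\<in>set_pmf \<nu>. pmf \<nu> x * expect \<nu>s (\<lambda>ys. F (x # ys)))"

lemma expect_cong:
  "(\<And>xs. list_all2 (\<lambda>x \<nu>. x \<in> set_pmf \<nu>) xs \<nu>s \<Longrightarrow> F xs = G xs) \<Longrightarrow> expect \<nu>s F = expect \<nu>s G"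
proof (induction \<nu>s arbitrary: F G)
  case (Cons \<nu> \<nu>s)
  have "expect \<nu>s (\<lambda>ys. F (x # ys)) = expect \<nu>s (\<lambda>ys. G (x # ys))" if "x \<in> set_pmf \<nu>" for x
    by (rule Cons.IH) (use Cons.prems that in auto)
  then show ?case by simp
qed simp

lemma expect_bound:
  assumes "\<forall>\<nu>\<in>set \<nu>s. finite (set_pmf \<nu>)"
    and "\<And>xs. list_all2 (\<lambda>x \<nu>. x \<in> set_pmf \<nu>) xs \<nu>s \<Longrightarrow> \<bar>F xs\<bar> \<le> B"
  shows "\<bar>expect \<nu>s F\<bar> \<le> B"
  using assms
proof (induction \<nu>s arbitrary: F)
  case (Cons \<nu> \<nu>s)
  have bound: "\<bar>expect \<nu>s (\<lambda>ys. F (x # ys))\<bar> \<le> B" if "x \<in> set_pmf \<nu>" for x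
    by (rule Cons.IH) (use Cons.prems that in auto)
  have "\<bar>expect (\<nu> # \<nu>s) F\<bar> \<le> (\<Sum>x\<in>set_pmf \<nu>. \<bar>pmf \<nu> x * expect \<nu>s (\<lambda>ys. F (x # ys))\<bar>)"
    by (simp add: sum_abs)
  also have "\<dots> \<le> (\<Sum>x\<in>set_pmf \<nu>. pmf \<nu> x * B)"
    by (rule sum_mono) (use bound in \<open>auto simp: abs_mult intro: mult_left_mono\<close>)
  also have "\<dots> = B"
    using sum_pmf_eq_1[of "set_pmf \<nu>" \<nu>] Cons.prems(1) by (simp add: sum_distrib_right[symmetric])
  finally show ?case .
qed simp

lemma expect_diff: "expect \<nu>s F - expect \<nu>s G = expect \<nu>s (\<lambda>xs. F xs - G xs)"
  by (induction \<nu>s arbitrary: F G) (simp_all add: sum_subtractf[symmetric] right_diff_distrib[symmetric])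

lemma expect_append: "expect (\<nu>s @ \<mu>s) F = expect \<nu>s (\<lambda>xs. expect \<mu>s (\<lambda>ys. F (xs @ ys)))"
  by (induction \<nu>s arbitrary: F) auto

lemma expect_snoc: "expect (\<nu>s @ [\<nu>]) F = expect \<nu>s (\<lambda>xs. \<Sum>x\<in>set_pmf \<nu>. pmf \<nu> x * F (xs @ [x]))"
  by (simp add: expect_append)

lemma sum_pmf_map_Hat:
  fixes A B :: "T pmf"
  assumes "finite (set_pmf A)" "finite (set_pmf B)"
  defines "P \<equiv> map_pmf (\<lambda>(x, y). Hat x y) (pair_pmf A B)"
  shows "(\<Sum>s\<in>set_pmf P. pmf P s * g s) = (\<Sum>x\<in>set_pmf A. pmf A x * (\<Sum>y\<in>set_pmf B. pmf B y * g (Hat x y)))"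
proof -
  let ?f = "\<lambda>(x, y). Hat x y"
  have inj: "inj ?f" by (auto simp: inj_def)
  have "(\<Sum>s\<in>set_pmf P. pmf P s * g s) = (\<Sum>z\<in>set_pmf A \<times> set_pmf B. pmf P (?f z) * g (?f z))"
    unfolding P_def by (simp add: sum.reindex[OF inj_on_subset[OF inj subset_UNIV]])
  also have "\<dots> = (\<Sum>(x, y)\<in>set_pmf A \<times> set_pmf B. pmf A x * pmf B y * g (Hat x y))"
    unfolding P_def by (intro sum.cong) (auto simp: pmf_map_inj'[OF inj] pmf_pair)
  also have "\<dots> = (\<Sum>x\<in>set_pmf A. pmf A x * (\<Sum>y\<in>set_pmf B. pmf B y * g (Hat x y)))"
    by (simp add: sum.cartesian_product[symmetric] sum_distrib_left mult.assoc)
  finally show ?thesis .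
qed

lemma finite_set_pmf_subst_A:
  "\<forall>\<nu>\<in>set \<nu>s. finite (set_pmf \<nu>) \<Longrightarrow> length \<nu>s = card_T t \<Longrightarrow> finite (set_pmf (subst_A t \<nu>s))"
proof (induction t arbitrary: \<nu>s)
  case One
  then show ?case by (cases \<nu>s) auto
next
  case (Hat a b)
  have "finite (set_pmf (subst_A a (take (card_T a) \<nu>s)))" "finite (set_pmf (subst_A b (drop (card_T a) \<nu>s)))"
    by (rule Hat.IH; use Hat.prems in \<open>auto dest: in_set_takeD in_set_dropD\<close>)+
  then show ?case by simp
qed

lemma expect_subst:
  assumes "\<forall>\<nu>\<in>set \<nu>s. finite (set_pmf \<nu>)" "length \<nu>s = card_T t"
  shows "expect \<nu>s (\<lambda>xs. g (subst t xs)) = (\<Sum>s\<in>set_pmf (subst_A t \<nu>s). pmf (subst_A t \<nu>s) s * g s)"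
  using assms
proof (induction t arbitrary: \<nu>s g)
  case One
  then obtain \<nu> where "\<nu>s = [\<nu>]" by (cases \<nu>s) auto
  then show ?case by simp
next
  case (Hat a b)
  let ?n = "card_T a"
  let ?A = "subst_A a (take ?n \<nu>s)" and ?B = "subst_A b (drop ?n \<nu>s)"
  have fin: "\<forall>\<nu>\<in>set (take ?n \<nu>s). finite (set_pmf \<nu>)" "\<forall>\<nu>\<in>set (drop ?n \<nu>s). finite (set_pmf \<nu>)"
    using Hat.prems(1) by (auto dest: in_set_takeD in_set_dropD)
  have len: "length (take ?n \<nu>s) = card_T a" "length (drop ?n \<nu>s) = card_T b"
    using Hat.prems(2) by auto
  have "expect \<nu>s (\<lambda>xs. g (subst (Hat a b) xs))
      = expect (take ?n \<nu>s) (\<lambda>xs. expect (drop ?n \<nu>s) (\<lambda>ys. g (subst (Hat a b) (xs @ ys))))"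
    using expect_append[of "take ?n \<nu>s" "drop ?n \<nu>s"] by simp
  also have "\<dots> = expect (take ?n \<nu>s) (\<lambda>xs. expect (drop ?n \<nu>s) (\<lambda>ys. g (Hat (subst a xs) (subst b ys))))"
  proof (rule expect_cong)
    fix xs assume "list_all2 (\<lambda>x \<nu>. x \<in> set_pmf \<nu>) xs (take ?n \<nu>s)"
    then have "length xs = ?n" using len by (simp add: list_all2_lengthD)
    then show "expect (drop ?n \<nu>s) (\<lambda>ys. g (subst (Hat a b) (xs @ ys)))
             = expect (drop ?n \<nu>s) (\<lambda>ys. g (Hat (subst a xs) (subst b ys)))" by simp
  qed
  also have "\<dots> = expect (take ?n \<nu>s) (\<lambda>xs. \<Sum>y\<in>set_pmf ?B. pmf ?B y * g (Hat (subst a xs) y))"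
    by (intro arg_cong[where f="expect (take ?n \<nu>s)"] ext Hat.IH(2)[OF fin(2) len(2)])
  also have "\<dots> = (\<Sum>x\<in>set_pmf ?A. pmf ?A x * (\<Sum>y\<in>set_pmf ?B. pmf ?B y * g (Hat x y)))"
    by (rule Hat.IH(1)[OF fin(1) len(1)])
  also have "\<dots> = (\<Sum>s\<in>set_pmf (subst_A (Hat a b) \<nu>s). pmf (subst_A (Hat a b) \<nu>s) s * g s)"
    using sum_pmf_map_Hat[OF finite_set_pmf_subst_A[OF fin(1) len(1)] finite_set_pmf_subst_A[OF fin(2) len(2)]]
    by simp
  finally show ?case .
qed

section \<open>Means concentrated on the levels of an ultrafilter\<close>

lemma pmf_of_weights_exists:
  fixes w :: "'a \<Rightarrow> real"
  assumes "finite A" "\<And>x. x \<in> A \<Longrightarrow> 0 < w x" "sum w A = 1"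
  obtains \<nu> where "set_pmf \<nu> = A" "\<And>x. x \<in> A \<Longrightarrow> pmf \<nu> x = w x"
proof -
  define f where "f x = (if x \<in> A then w x else 0)" for x
  have nonneg: "0 \<le> f x" for x unfolding f_def using assms(2) by (simp add: less_imp_le)
  have "(\<integral>\<^sup>+x. ennreal (f x) \<partial>count_space UNIV) = (\<Sum>x\<in>A. ennreal (f x))"
    by (rule nn_integral_count_space') (use assms(1) in \<open>auto simp: f_def\<close>)
  also have "\<dots> = ennreal (\<Sum>x\<in>A. f x)" by (rule sum_ennreal) (use nonneg in auto)
  also have "(\<Sum>x\<in>A. f x) = 1" using assms(3) unfolding f_def by simp
  finally have "(\<integral>\<^sup>+x. ennreal (f x) \<partial>count_space UNIV) = 1" by simp
  then have "pmf (embed_pmf f) x = f x" "set_pmf (embed_pmf f) = {x. f x \<noteq> 0}" for x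
    using pmf_embed_pmf[of f x] set_embed_pmf[of f] nonneg by blast+
  moreover have "{x. f x \<noteq> 0} = A" unfolding f_def using assms(2) by force
  ultimately show thesis using that[of "embed_pmf f"] unfolding f_def by simp
qed

lemma finite_range_floor_quotients:
  fixes F :: "('a \<Rightarrow> real) set"
  assumes "finite F" "\<And>\<phi> x. \<phi> \<in> F \<Longrightarrow> \<bar>\<phi> x\<bar> \<le> 1" "0 < \<eta>"
  shows "finite (range (\<lambda>t. restrict (\<lambda>\<phi>. \<lfloor>\<phi> t / \<eta>\<rfloor>) F))"
proof (rule finite_subset)
  show "range (\<lambda>t. restrict (\<lambda>\<phi>. \<lfloor>\<phi> t / \<eta>\<rfloor>) F) \<subseteq> (\<Pi>\<^sub>E \<phi>\<in>F. {\<lfloor>- 1 / \<eta>\<rfloor>..\<lfloor>1 / \<eta>\<rfloor>})"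
  proof (rule image_subsetI)
    fix t
    have "\<lfloor>\<phi> t / \<eta>\<rfloor> \<in> {\<lfloor>- 1 / \<eta>\<rfloor>..\<lfloor>1 / \<eta>\<rfloor>}" if "\<phi> \<in> F" for \<phi>
    proof -
      have "- 1 \<le> \<phi> t" "\<phi> t \<le> 1" using assms(2)[OF that, of t] by (auto simp: abs_le_iff)
      then have "- 1 / \<eta> \<le> \<phi> t / \<eta>" "\<phi> t / \<eta> \<le> 1 / \<eta>"
        using divide_right_mono[of "- 1" "\<phi> t" \<eta>] divide_right_mono[of "\<phi> t" 1 \<eta>] assms(3) by auto
      then show ?thesis using floor_mono by auto
    qed
    then show "restrict (\<lambda>\<phi>. \<lfloor>\<phi> t / \<eta>\<rfloor>) F \<in> (\<Pi>\<^sub>E \<phi>\<in>F. {\<lfloor>- 1 / \<eta>\<rfloor>..\<lfloor>1 / \<eta>\<rfloor>})"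
      by (simp add: restrict_PiE_iff)
  qed
  show "finite (\<Pi>\<^sub>E \<phi>\<in>F. {\<lfloor>- 1 / \<eta>\<rfloor>..\<lfloor>1 / \<eta>\<rfloor>})" using assms(1) by (simp add: finite_PiE)
qed

locale level_mean = idempotent_mean +
  fixes U :: "nat set set"
  assumes U_free: "U \<in> free_ultrafilters"
    and mean_add: "\<And>f g. bounded_fun f \<Longrightarrow> bounded_fun g \<Longrightarrow> m (\<lambda>x. f x + g x) = m f + m g"
    and mean_smult: "\<And>f a. bounded_fun f \<Longrightarrow> m (\<lambda>x. a * f x) = a * m f"
    and mean_mono: "\<And>f g. bounded_fun f \<Longrightarrow> bounded_fun g \<Longrightarrow> (\<And>x. f x \<le> g x) \<Longrightarrow> m f \<le> m g"
    and mean_one: "m (\<lambda>x. 1) = 1"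
    and mean_level: "\<And>A. A \<in> U \<Longrightarrow> m (indicator {t. card_T t \<in> A}) = 1"
begin

lemma U_ultrafilter: "ultrafilter U" and U_atLeast: "{N..} \<in> U"
  using U_free unfolding free_ultrafilters_def by auto

lemma mean_const: "m (\<lambda>x. c) = c"
  using mean_smult[of "\<lambda>x. 1" c] mean_one bounded_fun_const by simp

lemma mean_sum:
  "finite I \<Longrightarrow> (\<And>i. i \<in> I \<Longrightarrow> bounded_fun (f i)) \<Longrightarrow> m (\<lambda>x. \<Sum>i\<in>I. f i x) = (\<Sum>i\<in>I. m (f i))"
proof (induction I rule: finite_induct)
  case empty
  then show ?case using mean_const[of 0] by simp
next
  case (insert a I)
  then show ?case by (simp add: mean_add bounded_fun_sum)
qed

lemma mean_indicator_nonneg: "0 \<le> m (indicator S)"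
  using mean_mono[OF bounded_fun_const bounded_fun_indicator, of 0 S] mean_const[of 0] by simp

lemma mean_cell_estimate:
  assumes "bounded_fun \<phi>" and near: "\<And>t. t \<in> S \<Longrightarrow> \<bar>\<phi> t - c\<bar> \<le> \<eta>"
  shows "\<bar>c * m (indicator S) - m (\<lambda>t. indicator S t * \<phi> t)\<bar> \<le> \<eta> * m (indicator S)"
proof -
  have b: "bounded_fun (\<lambda>t. indicator S t * \<phi> t)" by (rule bounded_fun_mult[OF bounded_fun_indicator assms(1)])
  have bc: "bounded_fun (\<lambda>t. a * indicator S t)" for a
    by (rule bounded_fun_mult[OF bounded_fun_const bounded_fun_indicator])
  have lo: "(c - \<eta>) * m (indicator S) \<le> m (\<lambda>t. indicator S t * \<phi> t)"
  proof -
    have "(c - \<eta>) * indicator S t \<le> indicator S t * \<phi> t" for t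
      using near[of t] by (auto simp: indicator_def abs_le_iff)
    then have "m (\<lambda>t. (c - \<eta>) * indicator S t) \<le> m (\<lambda>t. indicator S t * \<phi> t)"
      by (rule mean_mono[OF bc b])
    then show ?thesis by (simp only: mean_smult[OF bounded_fun_indicator])
  qed
  have hi: "m (\<lambda>t. indicator S t * \<phi> t) \<le> (c + \<eta>) * m (indicator S)"
  proof -
    have "indicator S t * \<phi> t \<le> (c + \<eta>) * indicator S t" for t
      using near[of t] by (auto simp: indicator_def abs_le_iff)
    then have "m (\<lambda>t. indicator S t * \<phi> t) \<le> m (\<lambda>t. (c + \<eta>) * indicator S t)"
      by (rule mean_mono[OF b bc])
    then show ?thesis by (simp only: mean_smult[OF bounded_fun_indicator])
  qed
  show ?thesis using lo hi unfolding abs_le_iff left_diff_distrib distrib_right by linarith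
qed

lemma mean_partition:
  assumes "finite K" "\<And>t. key t \<in> K" "bounded_fun \<phi>"
  shows "m \<phi> = (\<Sum>\<kappa>\<in>K. m (\<lambda>t. indicator {t. key t = \<kappa>} t * \<phi> t))"
proof -
  have "(\<Sum>\<kappa>\<in>K. indicator {t. key t = \<kappa>} t * \<phi> t) = \<phi> t" for t
    using assms(1,2) by (simp add: indicator_def sum.delta')
  then have "m \<phi> = m (\<lambda>t. \<Sum>\<kappa>\<in>K. indicator {t. key t = \<kappa>} t * \<phi> t)" by simp
  also have "\<dots> = (\<Sum>\<kappa>\<in>K. m (\<lambda>t. indicator {t. key t = \<kappa>} t * \<phi> t))"
    by (rule mean_sum[OF assms(1)]) (rule bounded_fun_mult[OF bounded_fun_indicator assms(3)])
  finally show ?thesis .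
qed

lemma levels_of_positive_set:
  assumes "0 < m (indicator S)"
  shows "card_T ` S \<in> U"
proof (rule ccontr)
  let ?I = "indicator {t. card_T t \<in> - card_T ` S} :: T \<Rightarrow> real"
  assume "card_T ` S \<notin> U"
  then have "- card_T ` S \<in> U" using ultrafilter_Compl_iff[OF U_ultrafilter] by blast
  then have one: "m ?I = 1" by (rule mean_level)
  have "(indicator S t :: real) \<le> 1 + (- 1) * ?I t" for t by (auto simp: indicator_def)
  then have "m (indicator S) \<le> m (\<lambda>t. 1 + (- 1) * ?I t)"
    by (intro mean_mono bounded_fun_indicator bounded_fun_add bounded_fun_mult bounded_fun_const)
  also have "\<dots> = m (\<lambda>t. 1) + (- 1) * m ?I"
    by (simp only: mean_add[OF bounded_fun_const bounded_fun_mult[OF bounded_fun_const bounded_fun_indicator]]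
        mean_smult[OF bounded_fun_indicator])
  also have "\<dots> = 0" using one mean_one by simp
  finally show False using assms by simp
qed

lemma common_level_representatives:
  fixes key :: "T \<Rightarrow> 'k"
  assumes "finite G" "\<And>\<kappa>. \<kappa> \<in> G \<Longrightarrow> 0 < m (indicator {t. key t = \<kappa>})"
  obtains n r where "N < n" "\<And>\<kappa>. \<kappa> \<in> G \<Longrightarrow> key (r \<kappa>) = \<kappa> \<and> card_T (r \<kappa>) = n"
proof -
  let ?L = "\<lambda>\<kappa>. card_T ` {t. key t = \<kappa>}"
  have "\<Inter>(insert {Suc N..} (?L ` G)) \<in> U"
    by (rule ultrafilter_Inter[OF U_ultrafilter]) (use assms U_atLeast levels_of_positive_set in auto)
  then obtain n where n: "n \<in> \<Inter>(insert {Suc N..} (?L ` G))"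
    using ultrafilter_empty[OF U_ultrafilter] by (metis ex_in_conv)
  then have "\<forall>\<kappa>\<in>G. \<exists>t. key t = \<kappa> \<and> card_T t = n" by auto
  then obtain r where "\<forall>\<kappa>\<in>G. key (r \<kappa>) = \<kappa> \<and> card_T (r \<kappa>) = n" by (rule bchoice[THEN exE])
  moreover have "N < n" using n by auto
  ultimately show thesis using that by blast
qed

end

lemma abs_diff_less_of_floor_divide_eq:
  fixes a b \<eta> :: real
  assumes "0 < \<eta>" "\<lfloor>a / \<eta>\<rfloor> = \<lfloor>b / \<eta>\<rfloor>"
  shows "\<bar>a - b\<bar> < \<eta>"
proof -
  have "\<bar>a / \<eta> - b / \<eta>\<bar> < 1" using assms(2) by linarith
  then have "\<bar>a - b\<bar> / \<eta> < 1" using assms(1) by (simp add: diff_divide_distrib[symmetric])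
  then show ?thesis using assms(1) by simp
qed

context level_mean
begin

lemma mean_approx_by_representatives:
  fixes key :: "T \<Rightarrow> 'k"
  assumes K: "finite K" "\<And>t. key t \<in> K" and \<phi>: "bounded_fun \<phi>"
    and G: "G \<subseteq> K" "\<And>\<kappa>. \<kappa> \<in> K - G \<Longrightarrow> m (indicator {t. key t = \<kappa>}) = 0"
    and r: "\<And>\<kappa>. \<kappa> \<in> G \<Longrightarrow> key (r \<kappa>) = \<kappa>"
    and osc: "\<And>t t'. key t = key t' \<Longrightarrow> \<bar>\<phi> t - \<phi> t'\<bar> \<le> \<eta>"
  shows "\<bar>(\<Sum>\<kappa>\<in>G. m (indicator {t. key t = \<kappa>}) * \<phi> (r \<kappa>)) - m \<phi>\<bar> \<le> \<eta>"
proof -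
  let ?p = "\<lambda>\<kappa>. m (indicator {t. key t = \<kappa>})"
  let ?c = "\<lambda>\<kappa>. m (\<lambda>t. indicator {t. key t = \<kappa>} t * \<phi> t)"
  obtain B where B: "\<And>t. \<bar>\<phi> t\<bar> \<le> B" using \<phi> unfolding bounded_fun_def by blast
  have zero: "?c \<kappa> = 0" if "\<kappa> \<in> K - G" for \<kappa>
    using mean_cell_estimate[OF \<phi>, of "{t. key t = \<kappa>}" 0 B] B G(2)[OF that] by simp
  have "m \<phi> = (\<Sum>\<kappa>\<in>K. ?c \<kappa>)" by (rule mean_partition[of K key \<phi>, OF K \<phi>])
  also have "\<dots> = (\<Sum>\<kappa>\<in>G. ?c \<kappa>)" by (rule sum.mono_neutral_right[OF K(1) G(1)]) (use zero in blast)
  finally have m\<phi>: "m \<phi> = (\<Sum>\<kappa>\<in>G. ?c \<kappa>)" .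
  have p_sum: "(\<Sum>\<kappa>\<in>K. ?p \<kappa>) = 1"
    using mean_partition[of K key "\<lambda>_. 1", OF K bounded_fun_const] mean_one by simp
  have "0 \<le> \<eta>" using osc[of t t for t] by (meson abs_ge_zero order_trans)
  have "\<bar>(\<Sum>\<kappa>\<in>G. ?p \<kappa> * \<phi> (r \<kappa>)) - m \<phi>\<bar> = \<bar>\<Sum>\<kappa>\<in>G. \<phi> (r \<kappa>) * ?p \<kappa> - ?c \<kappa>\<bar>"
    unfolding m\<phi> by (simp add: sum_subtractf mult.commute)
  also have "\<dots> \<le> (\<Sum>\<kappa>\<in>G. \<bar>\<phi> (r \<kappa>) * ?p \<kappa> - ?c \<kappa>\<bar>)" by (rule sum_abs)
  also have "\<dots> \<le> (\<Sum>\<kappa>\<in>G. \<eta> * ?p \<kappa>)"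
    by (intro sum_mono mean_cell_estimate[OF \<phi>]) (use r osc in auto)
  also have "\<dots> \<le> (\<Sum>\<kappa>\<in>K. \<eta> * ?p \<kappa>)"
    by (rule sum_mono2[OF K(1) G(1)]) (use \<open>0 \<le> \<eta>\<close> mean_indicator_nonneg in simp)
  also have "\<dots> = \<eta>" using p_sum by (simp add: sum_distrib_left[symmetric])
  finally show ?thesis .
qed

lemma representative_measure_exists:
  fixes key :: "T \<Rightarrow> 'k"
  assumes K: "finite K" "\<And>t. key t \<in> K" and G: "G = {\<kappa>\<in>K. 0 < m (indicator {t. key t = \<kappa>})}"
  obtains n r \<nu> where "N < n" "finite (set_pmf \<nu>)" "in_A n \<nu>" "\<And>\<kappa>. \<kappa> \<in> G \<Longrightarrow> key (r \<kappa>) = \<kappa>"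
    "\<And>\<phi>. (\<Sum>x\<in>set_pmf \<nu>. pmf \<nu> x * \<phi> x) = (\<Sum>\<kappa>\<in>G. m (indicator {t. key t = \<kappa>}) * \<phi> (r \<kappa>))"
proof -
  let ?p = "\<lambda>\<kappa>. m (indicator {t. key t = \<kappa>})"
  have finG: "finite G" using K(1) unfolding G by simp
  have zero: "?p \<kappa> = 0" if "\<kappa> \<in> K - G" for \<kappa>
    using that mean_indicator_nonneg[of "{t. key t = \<kappa>}"] unfolding G by simp
  obtain n r where n: "N < n" and r: "\<And>\<kappa>. \<kappa> \<in> G \<Longrightarrow> key (r \<kappa>) = \<kappa> \<and> card_T (r \<kappa>) = n"
    using common_level_representatives[OF finG, of key N] unfolding G by blast
  have r_key: "\<And>\<kappa>. \<kappa> \<in> G \<Longrightarrow> key (r \<kappa>) = \<kappa>" and r_card: "\<And>\<kappa>. \<kappa> \<in> G \<Longrightarrow> card_T (r \<kappa>) = n"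
    using r by auto
  have inj: "inj_on r G" by (rule inj_on_inverseI[where g=key]) (rule r_key)
  have "sum (\<lambda>t. ?p (key t)) (r ` G) = (\<Sum>\<kappa>\<in>G. ?p \<kappa>)"
    using sum.reindex[OF inj, of "\<lambda>t. ?p (key t)"] r_key by simp
  also have "\<dots> = (\<Sum>\<kappa>\<in>K. ?p \<kappa>)"
    by (rule sum.mono_neutral_left[OF K(1)]) (use zero G in auto)
  also have "\<dots> = 1" using mean_partition[of K key "\<lambda>_. 1", OF K bounded_fun_const] mean_one by simp
  finally have sum1: "sum (\<lambda>t. ?p (key t)) (r ` G) = 1" .
  have pos: "0 < ?p (key x)" if "x \<in> r ` G" for x using that r_key unfolding G by auto
  obtain \<nu> where set\<nu>: "set_pmf \<nu> = r ` G" and pmf\<nu>: "\<And>x. x \<in> r ` G \<Longrightarrow> pmf \<nu> x = ?p (key x)"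
    using pmf_of_weights_exists[OF finite_imageI[OF finG] pos sum1] by blast
  show thesis
  proof (rule that[OF n _ _ r_key])
    show "finite (set_pmf \<nu>)" using set\<nu> finG by simp
    show "in_A n \<nu>" using set\<nu> r_card unfolding in_A_def by auto
    show "(\<Sum>x\<in>set_pmf \<nu>. pmf \<nu> x * \<phi> x) = (\<Sum>\<kappa>\<in>G. ?p \<kappa> * \<phi> (r \<kappa>))" for \<phi>
      unfolding set\<nu> by (simp add: sum.reindex[OF inj] pmf\<nu> r_key)
  qed
qed

text \<open>Round all test functions to multiples of \<open>\<delta> / 2\<close> and put the mass of each rounding cell on
  one representative.\<close>
lemma finite_approximation:
  fixes F :: "(T \<Rightarrow> real) set"
  assumes F: "finite F" "\<And>\<phi> x. \<phi> \<in> F \<Longrightarrow> \<bar>\<phi> x\<bar> \<le> 1" and "0 < \<delta>"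
  obtains n \<nu> where "N < n" "finite (set_pmf \<nu>)" "in_A n \<nu>"
    "\<And>\<phi>. \<phi> \<in> F \<Longrightarrow> \<bar>(\<Sum>x\<in>set_pmf \<nu>. pmf \<nu> x * \<phi> x) - m \<phi>\<bar> < \<delta>"
proof -
  define \<eta> where "\<eta> = \<delta> / 2"
  have "0 < \<eta>" using \<open>0 < \<delta>\<close> unfolding \<eta>_def by simp
  define key where "key t = restrict (\<lambda>\<phi>. \<lfloor>\<phi> t / \<eta>\<rfloor>) F" for t
  define K where "K = range key"
  define G where "G = {\<kappa>\<in>K. 0 < m (indicator {t. key t = \<kappa>})}"
  have K: "finite K" "\<And>t. key t \<in> K"
    unfolding K_def key_def by (rule finite_range_floor_quotients) (use F \<open>0 < \<eta>\<close> in auto)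
  obtain n r \<nu> where \<nu>: "N < n" "finite (set_pmf \<nu>)" "in_A n \<nu>" and r: "\<And>\<kappa>. \<kappa> \<in> G \<Longrightarrow> key (r \<kappa>) = \<kappa>"
    and sum: "\<And>\<phi>. (\<Sum>x\<in>set_pmf \<nu>. pmf \<nu> x * \<phi> x) = (\<Sum>\<kappa>\<in>G. m (indicator {t. key t = \<kappa>}) * \<phi> (r \<kappa>))"
    by (rule representative_measure_exists[OF K G_def, of N]) blast
  show thesis
  proof (rule that[OF \<nu>])
    fix \<phi> assume \<phi>: "\<phi> \<in> F"
    have osc: "\<bar>\<phi> t - \<phi> t'\<bar> \<le> \<eta>" if "key t = key t'" for t t'
      using abs_diff_less_of_floor_divide_eq[OF \<open>0 < \<eta>\<close>, of "\<phi> t" "\<phi> t'"] fun_cong[OF that, of \<phi>] \<phi>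
      unfolding key_def by simp
    have "\<bar>(\<Sum>x\<in>set_pmf \<nu>. pmf \<nu> x * \<phi> x) - m \<phi>\<bar> \<le> \<eta>"
      unfolding sum
    proof (rule mean_approx_by_representatives[OF K _ _ _ r osc])
      show "bounded_fun \<phi>" by (rule bounded_funI[of _ 1]) (rule F(2)[OF \<phi>])
      show "G \<subseteq> K" unfolding G_def by blast
      show "m (indicator {t. key t = \<kappa>}) = 0" if "\<kappa> \<in> K - G" for \<kappa>
        using that mean_indicator_nonneg[of "{t. key t = \<kappa>}"] unfolding G_def by simp
    qed
    then show "\<bar>(\<Sum>x\<in>set_pmf \<nu>. pmf \<nu> x * \<phi> x) - m \<phi>\<bar> < \<delta>"
      using \<open>0 < \<delta>\<close> unfolding \<eta>_def by simp
  qed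
qed

end

section \<open>The increasing sequence of measures\<close>

lemma sum_geometric_tolerance_less:
  fixes \<epsilon> :: real
  assumes "finite I" "0 < \<epsilon>"
  shows "(\<Sum>i\<in>I. \<epsilon> / 2 ^ (i + 2)) < \<epsilon>"
proof -
  define M where "M = Suc (Max (insert 0 I))"
  have geom: "(\<Sum>i<N. \<epsilon> / 2 ^ (i + 2)) = \<epsilon> / 2 - \<epsilon> / 2 ^ (N + 1)" for N
    by (induction N) (auto simp: field_simps)
  have "(\<Sum>i\<in>I. \<epsilon> / 2 ^ (i + 2)) \<le> (\<Sum>i<M. \<epsilon> / 2 ^ (i + 2))"
    by (rule sum_mono2) (use assms in \<open>auto simp: M_def le_imp_less_Suc\<close>)
  also have "\<dots> < \<epsilon>" unfolding geom using assms(2) by (simp add: less_le_trans[of _ "\<epsilon> / 2"])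
  finally show ?thesis .
qed

context level_mean
begin

lemma mean_range:
  assumes "\<And>t. 0 \<le> c t \<and> c t \<le> 1"
  shows "0 \<le> m c \<and> m c \<le> 1"
proof -
  have c: "bounded_fun c" by (rule bounded_funI[of _ 1]) (use assms in \<open>simp add: abs_le_iff\<close>)
  have "m (\<lambda>x. 0) \<le> m c" "m c \<le> m (\<lambda>x. 1)"
    by (rule mean_mono; use c bounded_fun_const assms in simp)+
  then show ?thesis using mean_const by simp
qed

context
  fixes c :: "T \<Rightarrow> real" and \<epsilon> :: real
  assumes c_range: "\<And>t. 0 \<le> c t \<and> c t \<le> 1" and \<epsilon>_pos: "0 < \<epsilon>"
begin

lemma bounded_fun_c: "bounded_fun c"
  by (rule bounded_funI[of _ 1]) (use c_range in \<open>simp add: abs_le_iff\<close>)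

text \<open>Terms of size at most \<open>i + 2\<close> suffice, since admissibility bounds \<open>#(t\<^sub>k)\<close> by \<open>i\<^sub>k + 2\<close>.\<close>
definition test_functions :: "nat \<Rightarrow> T pmf list \<Rightarrow> (T \<Rightarrow> real) set" where
  "test_functions i prev = (\<lambda>(s, xs). \<lambda>x. cond_mean s (xs @ [x]) c) `
     {(s, xs). card_T s \<le> i + 2 \<and> length xs < card_T s \<and> set xs \<subseteq> (\<Union>\<nu>\<in>set prev. set_pmf \<nu>)}"

definition tolerance :: "nat \<Rightarrow> real" where
  "tolerance i = \<epsilon> / 2 ^ (i + 2)"

definition good_choice :: "nat \<Rightarrow> T pmf list \<Rightarrow> T pmf \<Rightarrow> bool" where
  "good_choice i prev \<nu> \<longleftrightarrow> finite (set_pmf \<nu>) \<and>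
     (\<exists>n. in_A n \<nu> \<and> (\<forall>\<nu>'\<in>set prev. \<forall>t\<in>set_pmf \<nu>'. card_T t < n)) \<and>
     (\<forall>\<phi>\<in>test_functions i prev. \<bar>(\<Sum>x\<in>set_pmf \<nu>. pmf \<nu> x * \<phi> x) - m \<phi>\<bar> < tolerance i)"

lemma finite_test_functions:
  assumes "\<forall>\<nu>\<in>set prev. finite (set_pmf \<nu>)"
  shows "finite (test_functions i prev)"
proof -
  let ?A = "\<Union>\<nu>\<in>set prev. set_pmf \<nu>"
  have "{(s, xs). card_T s \<le> i + 2 \<and> length xs < card_T s \<and> set xs \<subseteq> ?A}
        \<subseteq> {t. card_T t \<le> i + 2} \<times> {xs. set xs \<subseteq> ?A \<and> length xs \<le> i + 2}" by auto
  moreover have "finite ({t. card_T t \<le> i + 2} \<times> {xs. set xs \<subseteq> ?A \<and> length xs \<le> i + 2})"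
    by (intro finite_cartesian_product finite_card_T_le finite_lists_length_le) (use assms in auto)
  ultimately show ?thesis unfolding test_functions_def by (auto intro: finite_subset)
qed

lemma good_choice_exists:
  assumes "\<forall>\<nu>\<in>set prev. finite (set_pmf \<nu>)"
  shows "\<exists>\<nu>. good_choice i prev \<nu>"
proof -
  define N where "N = Max (insert 0 (card_T ` (\<Union>\<nu>\<in>set prev. set_pmf \<nu>)))"
  have bound: "\<bar>\<phi> x\<bar> \<le> 1" if "\<phi> \<in> test_functions i prev" for \<phi> x
  proof -
    from that obtain p where p: "p \<in> {(s, xs). card_T s \<le> i + 2 \<and> length xs < card_T s \<and>
        set xs \<subseteq> (\<Union>\<nu>\<in>set prev. set_pmf \<nu>)}" "\<phi> = (\<lambda>(s, xs). \<lambda>x. cond_mean s (xs @ [x]) c) p"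
      unfolding test_functions_def by (rule imageE)
    obtain s xs where "p = (s, xs)" by (cases p)
    then have "\<phi> = (\<lambda>x. cond_mean s (xs @ [x]) c)" "length xs < card_T s" using p by auto
    then show ?thesis using cond_mean_bound[of "xs @ [x]" s c 1] c_range by (simp add: abs_le_iff)
  qed
  have "\<exists>n \<nu>. N < n \<and> finite (set_pmf \<nu>) \<and> in_A n \<nu> \<and>
      (\<forall>\<phi>\<in>test_functions i prev. \<bar>(\<Sum>x\<in>set_pmf \<nu>. pmf \<nu> x * \<phi> x) - m \<phi>\<bar> < tolerance i)"
  proof (rule finite_approximation[where F="test_functions i prev" and \<delta>="tolerance i" and N=N])
    show "finite (test_functions i prev)" by (rule finite_test_functions[OF assms])
    show "\<bar>\<phi> x\<bar> \<le> 1" if "\<phi> \<in> test_functions i prev" for \<phi> x using that by (rule bound)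
    show "0 < tolerance i" unfolding tolerance_def using \<epsilon>_pos by simp
  qed blast
  then obtain n \<nu> where "N < n" "finite (set_pmf \<nu>)" "in_A n \<nu>"
    "\<forall>\<phi>\<in>test_functions i prev. \<bar>(\<Sum>x\<in>set_pmf \<nu>. pmf \<nu> x * \<phi> x) - m \<phi>\<bar> < tolerance i"
    by blast
  moreover have "card_T t \<le> N" if "\<nu>' \<in> set prev" "t \<in> set_pmf \<nu>'" for \<nu>' t
    unfolding N_def by (rule Max_ge) (use that assms in auto)
  ultimately show ?thesis unfolding good_choice_def by (meson le_less_trans)
qed

lemma good_choice_finite: "good_choice i prev \<nu> \<Longrightarrow> finite (set_pmf \<nu>)"
  unfolding good_choice_def by blast

fun chosen_prefix :: "nat \<Rightarrow> T pmf list" where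
  "chosen_prefix 0 = []"
| "chosen_prefix (Suc i) = chosen_prefix i @ [SOME \<nu>. good_choice i (chosen_prefix i) \<nu>]"

definition chosen :: "nat \<Rightarrow> T pmf" where
  "chosen i = (SOME \<nu>. good_choice i (chosen_prefix i) \<nu>)"

lemma chosen_prefix_eq: "chosen_prefix i = map chosen [0..<i]"
  by (induction i) (simp_all add: chosen_def)

lemma chosen_good_choice: "good_choice i (chosen_prefix i) (chosen i)"
proof -
  have "\<forall>\<nu>\<in>set (chosen_prefix i). finite (set_pmf \<nu>)"
  proof (induction i)
    case (Suc i)
    then show ?case using good_choice_finite[OF someI_ex[OF good_choice_exists[OF Suc]]] by simp
  qed simp
  then show ?thesis unfolding chosen_def by (rule someI_ex[OF good_choice_exists])
qed

lemma finite_set_pmf_chosen: "finite (set_pmf (chosen i))"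
  by (rule good_choice_finite[OF chosen_good_choice])

definition level :: "nat \<Rightarrow> nat" where
  "level i = card_T (SOME t. t \<in> set_pmf (chosen i))"

lemma in_A_card_T_some:
  assumes "in_A n \<nu>"
  shows "card_T (SOME t. t \<in> set_pmf \<nu>) = n"
proof -
  have "(SOME t. t \<in> set_pmf \<nu>) \<in> set_pmf \<nu>" using set_pmf_not_empty[of \<nu>] by (simp add: some_in_eq)
  then show ?thesis using assms unfolding in_A_def by blast
qed

lemma in_A_level: "in_A (level i) (chosen i)"
proof -
  obtain n where "in_A n (chosen i)" using chosen_good_choice unfolding good_choice_def by blast
  then show ?thesis using in_A_card_T_some unfolding level_def by simp
qed

lemma strict_mono_level: "strict_mono level"
proof (rule strict_monoI)
  fix i j :: nat assume "i < j"
  obtain n where n: "in_A n (chosen j)" "\<forall>\<nu>'\<in>set (chosen_prefix j). \<forall>t\<in>set_pmf \<nu>'. card_T t < n"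
    using chosen_good_choice unfolding good_choice_def by blast
  have "chosen i \<in> set (chosen_prefix j)" unfolding chosen_prefix_eq using \<open>i < j\<close> by simp
  moreover have "(SOME t. t \<in> set_pmf (chosen i)) \<in> set_pmf (chosen i)"
    using set_pmf_not_empty[of "chosen i"] by (simp add: some_in_eq)
  ultimately have "level i < n" using n(2) unfolding level_def by blast
  then show "level i < level j" using in_A_card_T_some[OF n(1)] unfolding level_def by simp
qed

lemma test_function_of_admissible:
  assumes adm: "admissible t is" and k: "k < card_T t"
    and xs: "list_all2 (\<lambda>x \<nu>. x \<in> set_pmf \<nu>) xs (take k (map chosen is))"
  shows "(\<lambda>x. cond_mean (sub_k t k) (xs @ [x]) c) \<in> test_functions (is ! k) (chosen_prefix (is ! k))"
proof -
  have len: "length is = card_T t" and sorted: "sorted_wrt (<) is" and lk: "l_k k t \<le> int (is ! k)"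
    using adm k unfolding admissible_def by auto
  have len_xs: "length xs = k" using list_all2_lengthD[OF xs] k len by simp
  have "set xs \<subseteq> (\<Union>\<nu>\<in>set (chosen_prefix (is ! k)). set_pmf \<nu>)"
  proof
    fix x assume "x \<in> set xs"
    then obtain j where j: "j < k" "x = xs ! j" using len_xs by (auto simp: in_set_conv_nth)
    then have "x \<in> set_pmf (chosen (is ! j))" using xs k len by (auto simp: list_all2_conv_all_nth)
    moreover have "is ! j < is ! k" using sorted_wrt_nth_less[OF sorted j(1)] k len by simp
    then have "chosen (is ! j) \<in> set (chosen_prefix (is ! k))" unfolding chosen_prefix_eq by simp
    ultimately show "x \<in> (\<Union>\<nu>\<in>set (chosen_prefix (is ! k)). set_pmf \<nu>)" by blast
  qed
  moreover have "card_T (sub_k t k) \<le> is ! k + 2" using lk unfolding l_k_def by linarith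
  moreover have "length xs < card_T (sub_k t k)" using card_sub_k[OF k] len_xs by simp
  ultimately show ?thesis unfolding test_functions_def by force
qed

lemma expect_cond_mean_step:
  assumes adm: "admissible t is" and k: "k < card_T t"
  defines "\<nu>s \<equiv> map chosen is"
  shows "\<bar>expect (take (Suc k) \<nu>s) (\<lambda>xs. cond_mean t xs c) - expect (take k \<nu>s) (\<lambda>xs. cond_mean t xs c)\<bar>
    \<le> tolerance (is ! k)"
proof -
  have len: "length \<nu>s = card_T t" using adm unfolding admissible_def \<nu>s_def by simp
  have fin: "\<forall>\<nu>\<in>set (take k \<nu>s). finite (set_pmf \<nu>)"
    using finite_set_pmf_chosen unfolding \<nu>s_def by (metis ex_map_conv in_set_takeD)
  have len_xs: "length xs = k" if "list_all2 (\<lambda>x \<nu>. x \<in> set_pmf \<nu>) xs (take k \<nu>s)" for xs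
    using list_all2_lengthD[OF that] k len by simp
  have "expect (take (Suc k) \<nu>s) (\<lambda>xs. cond_mean t xs c) - expect (take k \<nu>s) (\<lambda>xs. cond_mean t xs c)
      = expect (take k \<nu>s) (\<lambda>xs. (\<Sum>x\<in>set_pmf (\<nu>s ! k). pmf (\<nu>s ! k) x * cond_mean t (xs @ [x]) c)
                                - m (\<lambda>x. cond_mean t (xs @ [x]) c))"
  proof -
    have "take (Suc k) \<nu>s = take k \<nu>s @ [\<nu>s ! k]" using k len by (simp add: take_Suc_conv_app_nth)
    moreover have "expect (take k \<nu>s) (\<lambda>xs. cond_mean t xs c)
        = expect (take k \<nu>s) (\<lambda>xs. m (\<lambda>x. cond_mean t (xs @ [x]) c))"
      by (rule expect_cong) (use k len_xs in \<open>simp add: cond_mean_snoc bounded_fun_c\<close>)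
    ultimately show ?thesis by (simp add: expect_snoc expect_diff)
  qed
  also have "\<bar>\<dots>\<bar> \<le> tolerance (is ! k)"
  proof (rule expect_bound[OF fin], rule less_imp_le)
    fix xs assume xs: "list_all2 (\<lambda>x \<nu>. x \<in> set_pmf \<nu>) xs (take k \<nu>s)"
    have "cond_mean t (xs @ [x]) c = cond_mean (sub_k t k) (xs @ [x]) c" for x
      using cond_mean_sub_k[OF k _ bounded_fun_c] len_xs[OF xs] by simp
    moreover have "\<nu>s ! k = chosen (is ! k)" using k len unfolding \<nu>s_def by simp
    ultimately show "\<bar>(\<Sum>x\<in>set_pmf (\<nu>s ! k). pmf (\<nu>s ! k) x * cond_mean t (xs @ [x]) c)
                      - m (\<lambda>x. cond_mean t (xs @ [x]) c)\<bar> < tolerance (is ! k)"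
      using chosen_good_choice[of "is ! k"] test_function_of_admissible[OF adm k xs[unfolded \<nu>s_def]]
      unfolding good_choice_def by simp
  qed
  finally show ?thesis .
qed

lemma chosen_estimate:
  assumes adm: "admissible t is"
  shows "\<bar>c_A c (subst_A t (map chosen is)) - m c\<bar> < \<epsilon>"
proof -
  define V where "V k = expect (take k (map chosen is)) (\<lambda>xs. cond_mean t xs c)" for k
  have len: "length is = card_T t" and sorted: "sorted_wrt (<) is"
    using adm unfolding admissible_def by auto
  have telescope: "\<bar>V k - m c\<bar> \<le> (\<Sum>j<k. tolerance (is ! j))" if "k \<le> card_T t" for k
    using that
  proof (induction k)
    case 0
    then show ?case by (simp add: V_def cond_mean_Nil bounded_fun_c)
  next
    case (Suc k)
    have "\<bar>V (Suc k) - V k\<bar> \<le> tolerance (is ! k)"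
      using expect_cond_mean_step[OF adm, of k] Suc.prems unfolding V_def by simp
    then show ?case using Suc by (auto simp: abs_le_iff)
  qed
  have fin: "\<forall>\<nu>\<in>set (map chosen is). finite (set_pmf \<nu>)" using finite_set_pmf_chosen by simp
  have "V (card_T t) = expect (map chosen is) (\<lambda>xs. c (subst t xs))"
    unfolding V_def using len
    by (auto intro!: expect_cong simp: cond_mean_complete list_all2_lengthD)
  also have "\<dots> = c_A c (subst_A t (map chosen is))"
    unfolding c_A_def using expect_subst[OF fin] len by simp
  finally have V_end: "V (card_T t) = c_A c (subst_A t (map chosen is))" .
  have "(\<Sum>j<card_T t. tolerance (is ! j)) = sum_list (map tolerance is)"
    by (simp add: sum_list_sum_nth len lessThan_atLeast0)
  also have "\<dots> = sum tolerance (set is)"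
    using sorted by (simp add: strict_sorted_iff sum_list_distinct_conv_sum_set)
  also have "\<dots> < \<epsilon>"
    unfolding tolerance_def by (rule sum_geometric_tolerance_less[OF finite_set \<epsilon>_pos])
  finally show ?thesis using telescope[of "card_T t"] V_end by simp
qed

theorem admissible_approximation:
  "\<exists>r. 0 \<le> r \<and> r \<le> 1 \<and>
     (\<exists>\<mu> :: nat \<Rightarrow> T pmf. (\<exists>n :: nat \<Rightarrow> nat. strict_mono n \<and> (\<forall>i. in_A (n i) (\<mu> i))) \<and>
        (\<forall>t is. admissible t is \<longrightarrow> \<bar>c_A c (subst_A t (map \<mu> is)) - r\<bar> < \<epsilon>))"
proof -
  have "\<exists>\<mu> :: nat \<Rightarrow> T pmf. (\<exists>n :: nat \<Rightarrow> nat. strict_mono n \<and> (\<forall>i. in_A (n i) (\<mu> i))) \<and>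
      (\<forall>t is. admissible t is \<longrightarrow> \<bar>c_A c (subst_A t (map \<mu> is)) - m c\<bar> < \<epsilon>)"
    using strict_mono_level in_A_level chosen_estimate by blast
  with mean_range[OF c_range] show ?thesis by (intro exI[of _ "m c"] conjI) simp_all
qed

end

end

section \<open>Finitely additive probability measures\<close>

lemma linftyI: "(\<And>x. x \<in> S \<Longrightarrow> \<bar>f x\<bar> \<le> B) \<Longrightarrow> (\<And>x. x \<notin> S \<Longrightarrow> f x = 0) \<Longrightarrow> f \<in> linfty S"
  unfolding linfty_def by blast

lemma linfty_bound: "f \<in> linfty S \<Longrightarrow> \<exists>B. \<forall>x\<in>S. \<bar>f x\<bar> \<le> B"
  unfolding linfty_def by blast

lemma linfty_add: "f \<in> linfty S \<Longrightarrow> g \<in> linfty S \<Longrightarrow> (\<lambda>x. f x + g x) \<in> linfty S"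
proof -
  assume f: "f \<in> linfty S" and g: "g \<in> linfty S"
  obtain A B where "\<forall>x\<in>S. \<bar>f x\<bar> \<le> A" "\<forall>x\<in>S. \<bar>g x\<bar> \<le> B" using f g linfty_bound by metis
  then have "\<bar>f x + g x\<bar> \<le> A + B" if "x \<in> S" for x using that by (meson abs_triangle_ineq add_mono order_trans)
  then show ?thesis by (rule linftyI) (use f g in \<open>auto simp: linfty_def\<close>)
qed

lemma linfty_smult: "f \<in> linfty S \<Longrightarrow> (\<lambda>x. a * f x) \<in> linfty S"
proof -
  assume f: "f \<in> linfty S"
  obtain A where "\<forall>x\<in>S. \<bar>f x\<bar> \<le> A" using f linfty_bound by metis
  then have "\<bar>a * f x\<bar> \<le> \<bar>a\<bar> * A" if "x \<in> S" for x using that by (simp add: abs_mult mult_left_mono)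
  then show ?thesis by (rule linftyI) (use f in \<open>auto simp: linfty_def\<close>)
qed

lemma linfty_const: "(\<lambda>x. if x \<in> S then c else 0) \<in> linfty S"
  by (rule linftyI[of _ _ "\<bar>c\<bar>"]) auto

context
  fixes \<phi> and S :: "'a set"
  assumes \<phi>: "\<phi> \<in> PrS S"
begin

lemma PrS_add: "f \<in> linfty S \<Longrightarrow> g \<in> linfty S \<Longrightarrow> \<phi> (\<lambda>x. f x + g x) = \<phi> f + \<phi> g"
  using \<phi> unfolding PrS_def by blast

lemma PrS_smult: "f \<in> linfty S \<Longrightarrow> \<phi> (\<lambda>x. a * f x) = a * \<phi> f"
  using \<phi> unfolding PrS_def by blast

lemma PrS_nonneg: "f \<in> linfty S \<Longrightarrow> (\<And>x. x \<in> S \<Longrightarrow> 0 \<le> f x) \<Longrightarrow> 0 \<le> \<phi> f"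
  using \<phi> unfolding PrS_def by blast

lemma PrS_one: "\<phi> (\<lambda>x. if x \<in> S then 1 else 0) = 1"
  using \<phi> unfolding PrS_def by blast

lemma PrS_outside: "f \<notin> linfty S \<Longrightarrow> \<phi> f = 0"
  using \<phi> unfolding PrS_def by blast

lemma PrS_mono: "f \<in> linfty S \<Longrightarrow> g \<in> linfty S \<Longrightarrow> (\<And>x. x \<in> S \<Longrightarrow> f x \<le> g x) \<Longrightarrow> \<phi> f \<le> \<phi> g"
proof -
  assume f: "f \<in> linfty S" and g: "g \<in> linfty S" and le: "\<And>x. x \<in> S \<Longrightarrow> f x \<le> g x"
  have mf: "(\<lambda>x. (- 1) * f x) \<in> linfty S" by (rule linfty_smult[OF f])
  have "0 \<le> \<phi> (\<lambda>x. g x + (- 1) * f x)" by (rule PrS_nonneg[OF linfty_add[OF g mf]]) (use le in simp)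
  also have "\<dots> = \<phi> g - \<phi> f" using PrS_add[OF g mf] PrS_smult[OF f, of "- 1"] by simp
  finally show ?thesis by simp
qed

lemma PrS_const: "\<phi> (\<lambda>x. if x \<in> S then c else 0) = c"
  using PrS_smult[OF linfty_const, of c 1] PrS_one by (simp add: if_distrib cong: if_cong)

lemma PrS_bound:
  assumes f: "f \<in> linfty S" and B: "\<And>x. x \<in> S \<Longrightarrow> \<bar>f x\<bar> \<le> B"
  shows "\<bar>\<phi> f\<bar> \<le> B"
proof -
  have "\<phi> f \<le> \<phi> (\<lambda>x. if x \<in> S then B else 0)"
    by (rule PrS_mono[OF f linfty_const]) (use B in \<open>auto simp: abs_le_iff\<close>)
  moreover have "\<phi> (\<lambda>x. if x \<in> S then - B else 0) \<le> \<phi> f"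
  proof (rule PrS_mono[OF linfty_const f])
    fix x assume "x \<in> S"
    then show "(if x \<in> S then - B else 0) \<le> f x" using B[of x] unfolding abs_le_iff by simp
  qed
  ultimately show ?thesis using PrS_const[of B] PrS_const[of "- B"] by simp
qed

end

lemma closed_evaluation_eq: "closed {\<phi> :: ('a \<Rightarrow> real) \<Rightarrow> real. \<phi> f = c}"
  by (intro closed_Collect_eq continuous_on_const continuous_on_product_coordinates)

lemma closed_PrS: "closed (PrS S)"
proof -
  have closed_imp: "closed {x. R x} \<Longrightarrow> closed {x. Q \<longrightarrow> R x}" for Q R by (cases Q) auto
  have eval: "continuous_on UNIV (\<lambda>\<phi>::('a \<Rightarrow> real) \<Rightarrow> real. \<phi> f)" for f
    by (rule continuous_on_product_coordinates)
  show ?thesis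
    unfolding PrS_def Ball_def
    by (intro closed_Collect_conj closed_Collect_all closed_imp closed_Collect_eq closed_Collect_le
        continuous_on_add continuous_on_mult_left continuous_on_const eval)
qed

text \<open>Every \<open>\<phi> \<in> Pr(S)\<close> is bounded on each \<open>f\<close> by a bound of \<open>f\<close> chosen independently of \<open>\<phi>\<close>, so
  \<open>Pr(S)\<close> is a closed subset of a product of compact intervals (Tychonoff).\<close>
lemma compact_PrS: "compact (PrS S)"
proof -
  define bnd where "bnd f = \<bar>SOME B. \<forall>x\<in>S. \<bar>f x\<bar> \<le> B\<bar>" for f :: "'a \<Rightarrow> real"
  have "compactin (product_topology (\<lambda>f. euclidean) UNIV) (PiE UNIV (\<lambda>f. {- bnd f .. bnd f}))"
    unfolding compactin_PiE by simp
  then have K: "compact (Pi UNIV (\<lambda>f. {- bnd f .. bnd f}))"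
    unfolding euclidean_product_topology PiE_UNIV_domain compactin_euclidean_iff .
  have "\<phi> f \<in> {- bnd f .. bnd f}" if "\<phi> \<in> PrS S" for \<phi> f
  proof (cases "f \<in> linfty S")
    case True
    from linfty_bound[OF this] have "\<forall>x\<in>S. \<bar>f x\<bar> \<le> (SOME B. \<forall>x\<in>S. \<bar>f x\<bar> \<le> B)" by (rule someI_ex)
    then have "\<bar>\<phi> f\<bar> \<le> bnd f" unfolding bnd_def using PrS_bound[OF that True] by fastforce
    then show ?thesis by (simp add: abs_le_iff)
  qed (simp add: PrS_outside[OF that] bnd_def)
  then have "PrS S = Pi UNIV (\<lambda>f. {- bnd f .. bnd f}) \<inter> PrS S" by blast
  then show ?thesis using compact_Int_closed[OF K closed_PrS[of S]] by simp
qed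

lemma convex_PrS: "convex_fun_set (PrS S)"
  unfolding convex_fun_set_def
proof (intro ballI allI impI)
  fix \<mu> \<nu> and u :: real assume \<mu>: "\<mu> \<in> PrS S" and \<nu>: "\<nu> \<in> PrS S" and u: "0 \<le> u \<and> u \<le> 1"
  show "(\<lambda>f. u * \<mu> f + (1 - u) * \<nu> f) \<in> PrS S"
    unfolding PrS_def
  proof (intro CollectI conjI ballI allI impI)
    fix f g assume "f \<in> linfty S" "g \<in> linfty S"
    then show "u * \<mu> (\<lambda>x. f x + g x) + (1 - u) * \<nu> (\<lambda>x. f x + g x)
        = u * \<mu> f + (1 - u) * \<nu> f + (u * \<mu> g + (1 - u) * \<nu> g)"
      using PrS_add[OF \<mu>] PrS_add[OF \<nu>] by (simp add: algebra_simps)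
  next
    fix a f assume "f \<in> linfty S"
    then show "u * \<mu> (\<lambda>x. a * f x) + (1 - u) * \<nu> (\<lambda>x. a * f x) = a * (u * \<mu> f + (1 - u) * \<nu> f)"
      using PrS_smult[OF \<mu>] PrS_smult[OF \<nu>] by (simp add: algebra_simps)
  next
    fix f assume "f \<in> linfty S" "\<forall>x\<in>S. 0 \<le> f x"
    then have "0 \<le> \<mu> f" "0 \<le> \<nu> f" using PrS_nonneg[OF \<mu>] PrS_nonneg[OF \<nu>] by auto
    then show "0 \<le> u * \<mu> f + (1 - u) * \<nu> f" using u by simp
  next
    show "u * \<mu> (\<lambda>x. if x \<in> S then 1 else 0) + (1 - u) * \<nu> (\<lambda>x. if x \<in> S then 1 else 0) = 1"
      using PrS_one[OF \<mu>] PrS_one[OF \<nu>] by simp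
  next
    fix f assume "f \<notin> linfty S"
    then show "u * \<mu> f + (1 - u) * \<nu> f = 0" using PrS_outside[OF \<mu>] PrS_outside[OF \<nu>] by simp
  qed
qed

lemma point_mass_PrS:
  assumes "a \<in> S"
  shows "(\<lambda>f. if f \<in> linfty S then f a else 0) \<in> PrS S"
  unfolding PrS_def
proof (intro CollectI conjI ballI allI impI)
  fix f g assume f: "f \<in> linfty S" and g: "g \<in> linfty S"
  then show "(if (\<lambda>x. f x + g x) \<in> linfty S then f a + g a else 0)
      = (if f \<in> linfty S then f a else 0) + (if g \<in> linfty S then g a else 0)"
    using linfty_add[OF f g] by simp
next
  fix c f assume f: "f \<in> linfty S"
  then show "(if (\<lambda>x. c * f x) \<in> linfty S then c * f a else 0) = c * (if f \<in> linfty S then f a else 0)"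
    using linfty_smult[OF f, of c] by simp
qed (use assms linfty_const in auto)

definition inner_integral :: "('a \<Rightarrow> 'a \<Rightarrow> 'a) \<Rightarrow> 'a set \<Rightarrow> (('a \<Rightarrow> real) \<Rightarrow> real) \<Rightarrow> ('a \<Rightarrow> real) \<Rightarrow> 'a \<Rightarrow> real"
  where "inner_integral op S \<nu> f = (\<lambda>x. if x \<in> S then \<nu> (\<lambda>y. if y \<in> S then f (op x y) else 0) else 0)"

lemma conv_eq_inner_integral:
  "conv op S \<mu> \<nu> f = (if f \<in> linfty S then \<mu> (inner_integral op S \<nu> f) else 0)"
  unfolding conv_def inner_integral_def ..

context
  fixes op :: "'a \<Rightarrow> 'a \<Rightarrow> 'a" and S :: "'a set"
  assumes op_closed: "\<And>x y. x \<in> S \<Longrightarrow> y \<in> S \<Longrightarrow> op x y \<in> S"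
begin

lemma linfty_shift:
  assumes "f \<in> linfty S" "x \<in> S"
  shows "(\<lambda>y. if y \<in> S then f (op x y) else 0) \<in> linfty S"
proof -
  obtain B where "\<forall>z\<in>S. \<bar>f z\<bar> \<le> B" using linfty_bound[OF assms(1)] by blast
  then show ?thesis by (intro linftyI[where B=B]) (use assms(2) op_closed in auto)
qed

lemma linfty_inner_integral:
  assumes \<nu>: "\<nu> \<in> PrS S" and f: "f \<in> linfty S"
  shows "inner_integral op S \<nu> f \<in> linfty S"
proof -
  obtain B where B: "\<forall>z\<in>S. \<bar>f z\<bar> \<le> B" using linfty_bound[OF f] by blast
  have "\<bar>\<nu> (\<lambda>y. if y \<in> S then f (op x y) else 0)\<bar> \<le> B" if "x \<in> S" for x
    by (rule PrS_bound[OF \<nu> linfty_shift[OF f that]]) (use B that op_closed in auto)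
  then show ?thesis by (intro linftyI[where B=B]) (auto simp: inner_integral_def)
qed

context
  fixes \<nu> assumes \<nu>: "\<nu> \<in> PrS S"
begin

lemma inner_integral_add:
  assumes f: "f \<in> linfty S" and g: "g \<in> linfty S"
  shows "inner_integral op S \<nu> (\<lambda>z. f z + g z) = (\<lambda>x. inner_integral op S \<nu> f x + inner_integral op S \<nu> g x)"
proof
  fix x show "inner_integral op S \<nu> (\<lambda>z. f z + g z) x = inner_integral op S \<nu> f x + inner_integral op S \<nu> g x"
  proof (cases "x \<in> S")
    case True
    have "(\<lambda>y. if y \<in> S then f (op x y) + g (op x y) else 0)
        = (\<lambda>y. (if y \<in> S then f (op x y) else 0) + (if y \<in> S then g (op x y) else 0))" by auto
    then show ?thesis
      using True PrS_add[OF \<nu> linfty_shift[OF f True] linfty_shift[OF g True]] by (simp add: inner_integral_def)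
  qed (simp add: inner_integral_def)
qed

lemma inner_integral_smult:
  assumes f: "f \<in> linfty S"
  shows "inner_integral op S \<nu> (\<lambda>z. a * f z) = (\<lambda>x. a * inner_integral op S \<nu> f x)"
proof
  fix x show "inner_integral op S \<nu> (\<lambda>z. a * f z) x = a * inner_integral op S \<nu> f x"
  proof (cases "x \<in> S")
    case True
    have "(\<lambda>y. if y \<in> S then a * f (op x y) else 0) = (\<lambda>y. a * (if y \<in> S then f (op x y) else 0))" by auto
    then show ?thesis using True PrS_smult[OF \<nu> linfty_shift[OF f True]] by (simp add: inner_integral_def)
  qed (simp add: inner_integral_def)
qed

lemma inner_integral_one:
  "inner_integral op S \<nu> (\<lambda>x. if x \<in> S then 1 else 0) = (\<lambda>x. if x \<in> S then 1 else 0)"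
proof
  fix x show "inner_integral op S \<nu> (\<lambda>x. if x \<in> S then 1 else 0) x = (if x \<in> S then 1 else 0)"
  proof (cases "x \<in> S")
    case True
    then have eq: "(\<lambda>y. if y \<in> S then if op x y \<in> S then 1 else 0 else 0) = (\<lambda>y. if y \<in> S then 1 else 0)"
      using op_closed by auto
    show ?thesis
      unfolding inner_integral_def
      by (simp only: True if_True) (rule trans[OF arg_cong[where f=\<nu>, OF eq] PrS_one[OF \<nu>]])
  qed (simp add: inner_integral_def)
qed

lemma inner_integral_nonneg:
  assumes f: "f \<in> linfty S" and "\<forall>x\<in>S. 0 \<le> f x"
  shows "0 \<le> inner_integral op S \<nu> f x"
proof (cases "x \<in> S")
  case True
  have "0 \<le> \<nu> (\<lambda>y. if y \<in> S then f (op x y) else 0)"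
    by (rule PrS_nonneg[OF \<nu> linfty_shift[OF f True]]) (use assms True op_closed in auto)
  then show ?thesis using True by (simp add: inner_integral_def)
qed (simp add: inner_integral_def)

end

lemma conv_PrS:
  assumes \<mu>: "\<mu> \<in> PrS S" and \<nu>: "\<nu> \<in> PrS S"
  shows "conv op S \<mu> \<nu> \<in> PrS S"
  unfolding PrS_def
proof (intro CollectI conjI ballI allI impI)
  note lin = linfty_inner_integral[OF \<nu>]
  fix f g assume f: "f \<in> linfty S" and g: "g \<in> linfty S"
  show "conv op S \<mu> \<nu> (\<lambda>x. f x + g x) = conv op S \<mu> \<nu> f + conv op S \<mu> \<nu> g"
    unfolding conv_eq_inner_integral using f g linfty_add[OF f g] inner_integral_add[OF \<nu> f g]
      PrS_add[OF \<mu> lin[OF f] lin[OF g]] by simp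
next
  note lin = linfty_inner_integral[OF \<nu>]
  fix a f assume f: "f \<in> linfty S"
  show "conv op S \<mu> \<nu> (\<lambda>x. a * f x) = a * conv op S \<mu> \<nu> f"
    unfolding conv_eq_inner_integral using f linfty_smult[OF f] inner_integral_smult[OF \<nu> f]
      PrS_smult[OF \<mu> lin[OF f]] by simp
next
  fix f assume f: "f \<in> linfty S" and "\<forall>x\<in>S. 0 \<le> f x"
  then have "0 \<le> \<mu> (inner_integral op S \<nu> f)"
    using PrS_nonneg[OF \<mu> linfty_inner_integral[OF \<nu> f]] inner_integral_nonneg[OF \<nu> f] by blast
  then show "0 \<le> conv op S \<mu> \<nu> f" unfolding conv_eq_inner_integral using f by simp
next
  show "conv op S \<mu> \<nu> (\<lambda>x. if x \<in> S then 1 else 0) = 1"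
    unfolding conv_eq_inner_integral inner_integral_one[OF \<nu>] using linfty_const[of S 1] PrS_one[OF \<mu>] by simp
next
  fix f assume "f \<notin> linfty S"
  then show "conv op S \<mu> \<nu> f = 0" unfolding conv_eq_inner_integral by simp
qed

end

section \<open>From an idempotent measure to the theorem\<close>

instance T :: countable
  by countable_datatype

fun left_comb :: "nat \<Rightarrow> T" where
  "left_comb 0 = One"
| "left_comb (Suc k) = Hat (left_comb k) One"

lemma card_left_comb: "card_T (left_comb k) = Suc k"
  by (induction k) auto

text \<open>The hypothesis speaks about binary systems on \<open>'a\<close>, so \<open>\<T>\<close> is transported into \<open>'a\<close>
  along an injection \<open>e\<close>.\<close>
locale term_embedding =
  fixes e :: "T \<Rightarrow> 'a" and U :: "nat set set"
  assumes inj_e: "inj e" and U_free: "U \<in> free_ultrafilters" and U_idem: "U \<oplus> U = U"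
begin

definition hat_op :: "'a \<Rightarrow> 'a \<Rightarrow> 'a" where
  "hat_op x y = e (Hat (inv e x) (inv e y))"

definition lift :: "(T \<Rightarrow> real) \<Rightarrow> 'a \<Rightarrow> real" where
  "lift g a = (if a \<in> range e then g (inv e a) else 0)"

definition level_indicator :: "nat set \<Rightarrow> 'a \<Rightarrow> real" where
  "level_indicator A = lift (indicator {t. card_T t \<in> A})"

definition concentrated :: "(('a \<Rightarrow> real) \<Rightarrow> real) set" where
  "concentrated = PrS (range e) \<inter> (\<Inter>A\<in>U. {\<phi>. \<phi> (level_indicator A) = 1})"

lemma hat_op_e [simp]: "hat_op (e x) (e y) = e (Hat x y)"
  unfolding hat_op_def using inj_e by simp

lemma hat_op_closed: "\<forall>x\<in>range e. \<forall>y\<in>range e. hat_op x y \<in> range e"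
  unfolding hat_op_def by blast

lemma lift_e [simp]: "lift g (e t) = g t"
  unfolding lift_def using inj_e by simp

lemma lift_add: "lift (\<lambda>x. f x + g x) = (\<lambda>a. lift f a + lift g a)"
  unfolding lift_def by auto

lemma lift_smult: "lift (\<lambda>x. c * f x) = (\<lambda>a. c * lift f a)"
  unfolding lift_def by auto

lemma lift_one: "lift (\<lambda>x. 1) = (\<lambda>a. if a \<in> range e then 1 else 0)"
  unfolding lift_def by auto

lemma linfty_lift:
  assumes "bounded_fun g"
  shows "lift g \<in> linfty (range e)"
proof -
  obtain B where "\<And>x. \<bar>g x\<bar> \<le> B" using assms unfolding bounded_fun_def by blast
  then show ?thesis by (intro linftyI[where B=B]) (auto simp: lift_def)
qed

lemma linfty_level_indicator: "level_indicator A \<in> linfty (range e)"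
  unfolding level_indicator_def by (rule linfty_lift[OF bounded_fun_indicator])

lemma U_ultrafilter: "ultrafilter U"
  using U_free unfolding free_ultrafilters_def by blast

lemma concentrated_level_indicator:
  assumes \<phi>: "\<phi> \<in> concentrated"
  shows "\<phi> (level_indicator B) = (if B \<in> U then 1 else 0)"
proof -
  have P: "\<phi> \<in> PrS (range e)" and one: "\<And>A. A \<in> U \<Longrightarrow> \<phi> (level_indicator A) = 1"
    using \<phi> unfolding concentrated_def by auto
  show ?thesis
  proof (cases "B \<in> U")
    case False
    then have "\<phi> (level_indicator (- B)) = 1" using one ultrafilter_Compl_iff[OF U_ultrafilter] by blast
    moreover have eq: "(\<lambda>a. level_indicator B a + level_indicator (- B) a) = (\<lambda>a. if a \<in> range e then 1 else 0)"
      by (auto simp: level_indicator_def lift_def indicator_def)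
    have "\<phi> (level_indicator B) + \<phi> (level_indicator (- B)) = 1"
      using PrS_add[OF P linfty_level_indicator[of B] linfty_level_indicator[of "- B"]] PrS_one[OF P]
      unfolding eq by simp
    ultimately show ?thesis using False by simp
  qed (simp add: one)
qed

lemma concentrated_subset_PrS: "concentrated \<subseteq> PrS (range e)"
  unfolding concentrated_def by blast

lemma closed_concentrated: "closed concentrated"
  unfolding concentrated_def by (intro closed_Int closed_PrS closed_INT ballI closed_evaluation_eq)

lemma compact_concentrated: "compact concentrated"
proof -
  have "concentrated = PrS (range e) \<inter> concentrated" unfolding concentrated_def by blast
  then show ?thesis using compact_Int_closed[OF compact_PrS[of "range e"] closed_concentrated] by simp
qed

lemma convex_concentrated: "convex_fun_set concentrated"
  using convex_PrS unfolding concentrated_def convex_fun_set_def by auto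

text \<open>By compactness it suffices to meet finitely many \<open>A \<in> U\<close>; a point mass on a term whose size
  lies in their intersection does.\<close>
lemma concentrated_nonempty: "concentrated \<noteq> {}"
proof -
  have "PrS (range e) \<inter> (\<Inter>A\<in>U. {\<phi>. \<phi> (level_indicator A) = 1}) \<noteq> {}"
  proof (rule compact_imp_fip_image[OF compact_PrS])
    show "closed {\<phi> :: ('a \<Rightarrow> real) \<Rightarrow> real. \<phi> (level_indicator A) = 1}" for A
      by (rule closed_evaluation_eq)
  next
    fix I assume I: "finite I" "I \<subseteq> U"
    have "\<Inter>(insert {1..} I) \<in> U"
      by (rule ultrafilter_Inter[OF U_ultrafilter]) (use I U_free in \<open>auto simp: free_ultrafilters_def\<close>)
    then obtain n where n: "n \<in> \<Inter>(insert {1..} I)"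
      using ultrafilter_empty[OF U_ultrafilter] by (metis ex_in_conv)
    define a where "a = e (left_comb (n - 1))"
    have "card_T (left_comb (n - 1)) = n" using n by (simp add: card_left_comb)
    then have "(\<lambda>f. if f \<in> linfty (range e) then f a else 0) \<in> PrS (range e) \<inter> (\<Inter>A\<in>I. {\<phi>. \<phi> (level_indicator A) = 1})"
      using point_mass_PrS[of a "range e"] n linfty_level_indicator
      by (auto simp: a_def level_indicator_def)
    then show "PrS (range e) \<inter> (\<Inter>A\<in>I. {\<phi>. \<phi> (level_indicator A) = 1}) \<noteq> {}" by blast
  qed
  then show ?thesis unfolding concentrated_def .
qed

lemma inner_integral_lift:
  "inner_integral hat_op (range e) \<nu> (lift g) = lift (\<lambda>x. \<nu> (lift (\<lambda>y. g (Hat x y))))"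
proof
  fix a show "inner_integral hat_op (range e) \<nu> (lift g) a = lift (\<lambda>x. \<nu> (lift (\<lambda>y. g (Hat x y)))) a"
  proof (cases "a \<in> range e")
    case True
    then obtain x where x: "a = e x" by blast
    have "(\<lambda>b. if b \<in> range e then lift g (hat_op a b) else 0) = lift (\<lambda>y. g (Hat x y))"
    proof
      fix b show "(if b \<in> range e then lift g (hat_op a b) else 0) = lift (\<lambda>y. g (Hat x y)) b"
        by (cases "b \<in> range e") (auto simp: x lift_def inv_f_f[OF inj_e] inj_eq[OF inj_e])
    qed
    then have "inner_integral hat_op (range e) \<nu> (lift g) a = \<nu> (lift (\<lambda>y. g (Hat x y)))"
      unfolding inner_integral_def if_P[OF True] by (rule arg_cong)
    then show ?thesis by (simp add: x)
  qed (simp add: inner_integral_def lift_def)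
qed

text \<open>Closure under convolution is where idempotence of \<open>U\<close> enters.\<close>
lemma conv_concentrated:
  assumes \<mu>: "\<mu> \<in> concentrated" and \<nu>: "\<nu> \<in> concentrated"
  shows "conv hat_op (range e) \<mu> \<nu> \<in> concentrated"
proof -
  have shift: "(\<lambda>y. indicator {t. card_T t \<in> A} (Hat x y) :: real) = indicator {t. card_T t \<in> {k. card_T x + k \<in> A}}"
    for x A by (auto simp: indicator_def)
  have "inner_integral hat_op (range e) \<nu> (level_indicator A) = lift (\<lambda>x. \<nu> (level_indicator {k. card_T x + k \<in> A}))"
    for A unfolding level_indicator_def inner_integral_lift shift ..
  also have "\<dots> A = level_indicator {n. {k. n + k \<in> A} \<in> U}" for A
    unfolding concentrated_level_indicator[OF \<nu>] by (simp add: level_indicator_def indicator_def[abs_def] of_bool_def)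
  finally have "conv hat_op (range e) \<mu> \<nu> (level_indicator A) = \<mu> (level_indicator {n. {k. n + k \<in> A} \<in> U})" for A
    unfolding conv_eq_inner_integral using linfty_level_indicator by simp
  moreover have "{n. {k. n + k \<in> A} \<in> U} \<in> U" if "A \<in> U" for A
    using that U_idem mem_ultra_plus[of A U U] by simp
  ultimately have "conv hat_op (range e) \<mu> \<nu> (level_indicator A) = 1" if "A \<in> U" for A
    using that concentrated_level_indicator[OF \<mu>] by simp
  moreover have "conv hat_op (range e) \<mu> \<nu> \<in> PrS (range e)"
    by (rule conv_PrS) (use hat_op_closed \<mu> \<nu> in \<open>auto simp: concentrated_def\<close>)
  ultimately show ?thesis unfolding concentrated_def by blast
qed

lemma level_mean_pullback:
  assumes \<mu>: "\<mu> \<in> concentrated" and idem: "conv hat_op (range e) \<mu> \<mu> = \<mu>"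
  shows "level_mean (\<lambda>g. \<mu> (lift g)) U"
proof
  have P: "\<mu> \<in> PrS (range e)" using \<mu> unfolding concentrated_def by blast
  show "sup_contractive (\<lambda>g. \<mu> (lift g))"
    unfolding sup_contractive_def
  proof (intro allI impI)
    fix g :: "T \<Rightarrow> real" and B assume B: "\<forall>x. \<bar>g x\<bar> \<le> B"
    then have "bounded_fun g" by (blast intro: bounded_funI)
    then show "\<bar>\<mu> (lift g)\<bar> \<le> B" by (rule PrS_bound[OF P linfty_lift]) (use B in \<open>simp add: lift_def\<close>)
  qed
  show "\<mu> (lift g) = \<mu> (lift (\<lambda>x. \<mu> (lift (\<lambda>y. g (Hat x y)))))" if "bounded_fun g" for g
    using arg_cong[where f="\<lambda>\<phi>. \<phi> (lift g)", OF idem] linfty_lift[OF that]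
    by (simp add: conv_eq_inner_integral inner_integral_lift)
  show "U \<in> free_ultrafilters" by (rule U_free)
  show "\<mu> (lift (\<lambda>x. f x + g x)) = \<mu> (lift f) + \<mu> (lift g)" if "bounded_fun f" "bounded_fun g" for f g
    unfolding lift_add by (rule PrS_add[OF P linfty_lift[OF that(1)] linfty_lift[OF that(2)]])
  show "\<mu> (lift (\<lambda>x. a * f x)) = a * \<mu> (lift f)" if "bounded_fun f" for f a
    unfolding lift_smult by (rule PrS_smult[OF P linfty_lift[OF that]])
  show "\<mu> (lift f) \<le> \<mu> (lift g)" if "bounded_fun f" "bounded_fun g" "\<And>x. f x \<le> g x" for f g
    by (rule PrS_mono[OF P linfty_lift[OF that(1)] linfty_lift[OF that(2)]]) (use that(3) in \<open>auto simp: lift_def\<close>)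
  show "\<mu> (lift (\<lambda>x. 1)) = 1" unfolding lift_one by (rule PrS_one[OF P])
  show "\<mu> (lift (indicator {t. card_T t \<in> A})) = 1" if "A \<in> U" for A
    using \<mu> that unfolding concentrated_def level_indicator_def by blast
qed

end

theorem theorem4p1:
  assumes univ: "infinite (UNIV :: 'a set)"
    and H: "\<And>(S :: 'a set) (op :: 'a \<Rightarrow> 'a \<Rightarrow> 'a) C.
      (\<forall>x\<in>S. \<forall>y\<in>S. op x y \<in> S) \<Longrightarrow>
      C \<subseteq> PrS S \<Longrightarrow> C \<noteq> {} \<Longrightarrow> compact C \<Longrightarrow> convex_fun_set C \<Longrightarrow>
      (\<forall>\<mu>\<in>C. \<forall>\<nu>\<in>C. conv op S \<mu> \<nu> \<in> C) \<Longrightarrow>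
      \<exists>\<mu>\<in>C. conv op S \<mu> \<mu> = \<mu>"
  shows "\<forall>c :: T \<Rightarrow> real. (\<forall>t. 0 \<le> c t \<and> c t \<le> 1) \<longrightarrow>
     (\<forall>\<epsilon>>0. \<exists>r. 0 \<le> r \<and> r \<le> 1 \<and>
        (\<exists>\<mu> :: nat \<Rightarrow> T pmf. (\<exists>n :: nat \<Rightarrow> nat. strict_mono n \<and> (\<forall>i. in_A (n i) (\<mu> i))) \<and>
           (\<forall>t is. admissible t is \<longrightarrow> \<bar>c_A c (subst_A t (map \<mu> is)) - r\<bar> < \<epsilon>)))"
proof -
  obtain f :: "nat \<Rightarrow> 'a" where "inj f" using infinite_countable_subset[OF univ] by blast
  define e :: "T \<Rightarrow> 'a" where "e = f \<circ> to_nat"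
  have "inj e" unfolding e_def using \<open>inj f\<close> by (simp add: inj_compose)
  obtain U where "U \<in> free_ultrafilters" "U \<oplus> U = U" by (rule idempotent_free_ultrafilter_exists)
  interpret E: term_embedding e U by unfold_locales fact+
  have "\<forall>\<mu>\<in>E.concentrated. \<forall>\<nu>\<in>E.concentrated. conv E.hat_op (range e) \<mu> \<nu> \<in> E.concentrated"
    using E.conv_concentrated by blast
  from H[OF E.hat_op_closed E.concentrated_subset_PrS E.concentrated_nonempty E.compact_concentrated
      E.convex_concentrated this]
  obtain \<mu> where \<mu>: "\<mu> \<in> E.concentrated" "conv E.hat_op (range e) \<mu> \<mu> = \<mu>" by blast
  interpret L: level_mean "\<lambda>g. \<mu> (E.lift g)" U by (rule E.level_mean_pullback[OF \<mu>])
  show ?thesis by (intro allI impI L.admissible_approximation) auto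
qed

end
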